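(* Let $a_0,a_1,a_2,a_3$ be nonnegative integers satisfying $a_i+a_{i+2}\ge a_{i+1}$ for $i=-1,0,1,2$ with the convention $a_{-1}=a_4=0$, i.e. \[ a_1\ge a_0,\quad a_0+a_2\ge a_1,\quad a_1+a_3\ge a_2,\quad a_2\ge a_3. \] For a random chain complex $0\leftarrow A_0\xleftarrow{d_1}A_1\xleftarrow{d_2}A_2\xleftarrow{d_3}A_3\leftarrow 0$ with $A_i=\mathbb R^{a_i}$, almost surely \[ \beta_0+\beta_1+\beta_2+\beta_3=|\chi|,\qquad \chi=a_0-a_1+a_2-a_3. \]
   Context: Model of a random chain complex: fix nonnegative integers $\vec a=(a_0,\dots,a_n)$ and $A_i=\mathbb R^{a_i}$. A sequence of linear maps $d_i:A_i\to A_{i-1}$ ($i=1,\dots,n$) is a point of $\mathbb R^N$, $N=\sum_{i=1}^n a_{i-1}a_i$. Let $M(\vec a)\subseteq\mathbb R^N$ be the real affine algebraic variety of chain complexes ($d_i\circ d_{i+1}=0$ for all $i$); let $k$ be its Hausdorff dimension. Fix a bounded measurable probability density $f$ on $\mathbb R^N$ (e.g.\ standard Gaussian) with $\int_{M(\vec a)} f\,d\mathcal H^k>0$. For a subvariety $Y\subseteq M(\vec a)$ define $\Pr(Y)=\int_Y f\,d\mathcal H^k/\int_{M(\vec a)} f\,d\mathcal H^k$, $\mathcal H^k$ the $k$-dimensional Hausdorff measure. A random chain complex is a point of $M(\vec a)$ under this measure; "almost surely" means with probability $1$. Betti numbers: with $r_i=\operatorname{rank} d_i$ and $r_0=r_{n+1}=0$,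 $\beta_i=a_i-r_i-r_{i+1}$. Here $n=3$. *)

theory Defs
  imports "HOL-Analysis.Analysis"
begin

definition haus_const :: "real \<Rightarrow> real" where
  "haus_const s = pi powr (s / 2) / Gamma (s / 2 + 1)"

text \<open>Contribution of one covering set; empty sets contribute 0,
  and for s = 0 every nonempty set contributes 1 (convention 0^0 = 1).\<close>
definition haus_content :: "real \<Rightarrow> 'a::metric_space set \<Rightarrow> real" where
  "haus_content s C =
     (if C = {} then 0 else if s = 0 then 1
      else haus_const s * (diameter C / 2) powr s)"

definition haus_pre :: "real \<Rightarrow> real \<Rightarrow> 'a::metric_space set \<Rightarrow> ennreal" where
  "haus_pre s \<delta> A =
     (INF C \<in> {C :: nat \<Rightarrow> 'a set. A \<subseteq> (\<Union>i. C i) \<and>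
                 (\<forall>i. bounded (C i) \<and> diameter (C i) \<le> \<delta>)}.
        (\<Sum>i. ennreal (haus_content s (C i))))"

definition haus_outer :: "real \<Rightarrow> 'a::metric_space set \<Rightarrow> ennreal" where
  "haus_outer s A = (SUP \<delta> \<in> {0<..}. haus_pre s \<delta> A)"

definition hausdorff_dim :: "'a::metric_space set \<Rightarrow> real" where
  "hausdorff_dim A = Inf {s. 0 \<le> s \<and> haus_outer s A = 0}"

definition hausdorff_measure :: "real \<Rightarrow> 'a::metric_space measure" where
  "hausdorff_measure s =
     measure_of UNIV
       {A. \<forall>T. haus_outer s T = haus_outer s (T \<inter> A) + haus_outer s (T - A)}
       (haus_outer s)"

text \<open>Coordinates of R^N: triples (i, r, c) = entry (r,c) of the matrix of
  d_i : R^(a i) -> R^(a (i-1)), for 1 <= i <= n.\<close>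
definition cc_idx :: "nat \<Rightarrow> (nat \<Rightarrow> nat) \<Rightarrow> (nat \<times> nat \<times> nat) set" where
  "cc_idx n a = {(i, r, c). 1 \<le> i \<and> i \<le> n \<and> r < a (i - 1) \<and> c < a i}"

definition cc_mat ::
  "nat \<Rightarrow> (nat \<Rightarrow> nat) \<Rightarrow> ('n::finite \<Rightarrow> nat \<times> nat \<times> nat) \<Rightarrow> real^'n
    \<Rightarrow> nat \<Rightarrow> nat \<Rightarrow> nat \<Rightarrow> real" where
  "cc_mat n a e x i r c =
     (if (i, r, c) \<in> cc_idx n a then x $ (inv e (i, r, c)) else 0)"

definition cc_variety ::
  "nat \<Rightarrow> (nat \<Rightarrow> nat) \<Rightarrow> ('n::finite \<Rightarrow> nat \<times> nat \<times> nat) \<Rightarrow> (real^'n) set" where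
  "cc_variety n a e =
     {x. \<forall>i. 1 \<le> i \<and> i < n \<longrightarrow>
          (\<forall>r < a (i - 1). \<forall>c < a (i + 1).
             (\<Sum>m < a i. cc_mat n a e x i r m * cc_mat n a e x (i + 1) m c) = 0)}"

definition lin_indep_cols :: "nat \<Rightarrow> (nat \<Rightarrow> nat \<Rightarrow> real) \<Rightarrow> nat set \<Rightarrow> bool" where
  "lin_indep_cols m M S =
     (\<forall>u. (\<forall>r < m. (\<Sum>j\<in>S. u j * M r j) = 0) \<longrightarrow> (\<forall>j\<in>S. u j = 0))"

definition mat_rank :: "nat \<Rightarrow> nat \<Rightarrow> (nat \<Rightarrow> nat \<Rightarrow> real) \<Rightarrow> nat" where
  "mat_rank m k M = Max (card ` {S. S \<subseteq> {..<k} \<and> lin_indep_cols m M S})"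

definition cc_rank ::
  "nat \<Rightarrow> (nat \<Rightarrow> nat) \<Rightarrow> ('n::finite \<Rightarrow> nat \<times> nat \<times> nat) \<Rightarrow> real^'n \<Rightarrow> nat \<Rightarrow> nat" where
  "cc_rank n a e x i =
     (if 1 \<le> i \<and> i \<le> n then mat_rank (a (i - 1)) (a i) (cc_mat n a e x i) else 0)"

definition betti ::
  "nat \<Rightarrow> (nat \<Rightarrow> nat) \<Rightarrow> ('n::finite \<Rightarrow> nat \<times> nat \<times> nat) \<Rightarrow> real^'n \<Rightarrow> nat \<Rightarrow> int" where
  "betti n a e x i = int (a i) - int (cc_rank n a e x i) - int (cc_rank n a e x (i + 1))"

end

(*
  Fix pivot column sets S_i with |S_i| = r_i.  Every d_i of rank r_i whose columns S_i are
  independent factors as d_i = W_i U_i, where U_i is in reduced echelon form (the identity on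
  the columns S_i, free coefficients P_i elsewhere) and W_i consists of the columns S_i of d_i.
  The relation d_(i-1) d_i = 0 becomes U_(i-1) W_i = 0, which determines the rows of W_i
  indexed by S_(i-1) from the remaining ones.  Hence the complexes with rank profile r are
  covered by countably many Lipschitz images of cubes of dimension
    D(r) = sum_i (a_(i-1) - r_(i-1)) r_i + r_i (a_i - r_i),
  and are null for every Hausdorff dimension above D(r).  Near the point where every W_i carries
  an identity block the parametrisation also has a Lipschitz inverse, so the variety has positive
  D(r)-dimensional measure.  Therefore dim M(a) = max_r D(r), and the complexes whose rank
  profile does not maximise D are negligible.  For n = 3 and a_0 <= a_1 a profile with
  r_1 + r_2 + r_3 < min (a_0 + a_2, a_1 + a_3) can always be improved, while for the remaining
  profiles the Betti numbers, which sum to a_0 + a_1 + a_2 + a_3 - 2 (r_1 + r_2 + r_3), sum to |chi|.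
*)
theory Submission
  imports Defs
begin

section \<open>Hausdorff outer measure\<close>

definition haus_covers :: "real \<Rightarrow> 'a::metric_space set \<Rightarrow> (nat \<Rightarrow> 'a set) set" where
  "haus_covers \<delta> A = {C. A \<subseteq> (\<Union>i. C i) \<and> (\<forall>i. bounded (C i) \<and> diameter (C i) \<le> \<delta>)}"

lemma haus_pre_eq_INF_covers:
  "haus_pre s \<delta> A = (INF C \<in> haus_covers \<delta> A. \<Sum>i. ennreal (haus_content s (C i)))"
  unfolding haus_pre_def haus_covers_def by simp

lemma haus_pre_le_cover:
  "C \<in> haus_covers \<delta> A \<Longrightarrow> haus_pre s \<delta> A \<le> (\<Sum>i. ennreal (haus_content s (C i)))"
  unfolding haus_pre_eq_INF_covers by (rule INF_lower)

lemma haus_pre_less_imp_cover: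
  "haus_pre s \<delta> A < x \<Longrightarrow> \<exists>C \<in> haus_covers \<delta> A. (\<Sum>i. ennreal (haus_content s (C i))) < x"
  unfolding haus_pre_eq_INF_covers INF_less_iff .

lemma haus_pre_mono: "A \<subseteq> B \<Longrightarrow> haus_pre s \<delta> A \<le> haus_pre s \<delta> B"
  unfolding haus_pre_eq_INF_covers haus_covers_def by (rule INF_superset_mono) auto

lemma haus_outer_mono: "A \<subseteq> B \<Longrightarrow> haus_outer s A \<le> haus_outer s B"
  unfolding haus_outer_def by (rule SUP_mono) (use haus_pre_mono in blast)

lemma haus_pre_le_haus_outer: "\<delta> > 0 \<Longrightarrow> haus_pre s \<delta> A \<le> haus_outer s A"
  unfolding haus_outer_def by (rule SUP_upper) auto

lemma haus_pre_countably_subadditive: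
  "haus_pre s \<delta> (\<Union>i. A i) \<le> (\<Sum>i. haus_pre s \<delta> (A i))"
proof (rule ennreal_le_epsilon)
  fix e :: real
  assume fin: "(\<Sum>i. haus_pre s \<delta> (A i)) < top" and e: "0 < e"
  have "haus_pre s \<delta> (A i) < haus_pre s \<delta> (A i) + e * (1/2) ^ Suc i" for i
    using fin e by (auto simp: less_top dest!: ennreal_suminf_lessD)
  then have "\<exists>C \<in> haus_covers \<delta> (A i).
      (\<Sum>j. ennreal (haus_content s (C j))) < haus_pre s \<delta> (A i) + e * (1/2) ^ Suc i" for i
    by (rule haus_pre_less_imp_cover)
  then obtain C where C: "\<And>i. C i \<in> haus_covers \<delta> (A i)"
    and C_le: "\<And>i. (\<Sum>j. ennreal (haus_content s (C i j))) \<le> haus_pre s \<delta> (A i) + e * (1/2) ^ Suc i"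
    by (metis less_imp_le)
  have "(\<lambda>n. case_prod C (prod_decode n)) \<in> haus_covers \<delta> (\<Union>i. A i)"
    using C unfolding haus_covers_def
    by (auto simp: subset_eq split: prod.splits) (metis prod.case prod_encode_inverse)
  then have "haus_pre s \<delta> (\<Union>i. A i) \<le> (\<Sum>n. ennreal (haus_content s (case_prod C (prod_decode n))))"
    by (rule haus_pre_le_cover)
  also have "\<dots> = (\<Sum>i. \<Sum>j. ennreal (haus_content s (C i j)))"
    by (rule suminf_ennreal_2dimen) simp
  also have "\<dots> \<le> (\<Sum>i. haus_pre s \<delta> (A i) + e * (1/2) ^ Suc i)"
    by (intro suminf_le C_le) auto
  also have "\<dots> = (\<Sum>i. haus_pre s \<delta> (A i)) + (\<Sum>i. ennreal e * ennreal ((1/2) ^ Suc i))"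
    using e by (subst suminf_add[symmetric])
      (auto simp del: ennreal_suminf_cmult simp add: ennreal_mult[symmetric])
  also have "\<dots> = (\<Sum>i. haus_pre s \<delta> (A i)) + e"
    unfolding ennreal_suminf_cmult
    by (subst suminf_ennreal_eq[OF zero_le_power power_half_series]) auto
  finally show "haus_pre s \<delta> (\<Union>i. A i) \<le> (\<Sum>i. haus_pre s \<delta> (A i)) + e" .
qed

lemma haus_outer_countably_subadditive:
  "haus_outer s (\<Union>i. A i) \<le> (\<Sum>i. haus_outer s (A i))"
proof -
  have "haus_pre s \<delta> (\<Union>i. A i) \<le> (\<Sum>i. haus_outer s (A i))" if "\<delta> > 0" for \<delta>
    using haus_pre_countably_subadditive
    by (rule order_trans) (intro suminf_le haus_pre_le_haus_outer that; simp)
  then show ?thesis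
    unfolding haus_outer_def[of s "\<Union>i. A i"] by (intro SUP_least) auto
qed

lemma haus_outer_empty: "haus_outer s {} = 0"
proof -
  have "haus_pre s \<delta> {} = 0" if "\<delta> > 0" for \<delta>
    using haus_pre_le_cover[of "\<lambda>_. {}" \<delta> "{}" s] that
    by (simp add: haus_covers_def haus_content_def)
  then show ?thesis
    unfolding haus_outer_def by (subst SUP_cong[OF refl, of _ _ "\<lambda>_. 0"]) auto
qed

lemma haus_outer_Un_le: "haus_outer s (A \<union> B) \<le> haus_outer s A + haus_outer s B"
proof -
  define F where "F i = (if i = 0 then A else if i = 1 then B else {})" for i :: nat
  have "A \<union> B = (\<Union>i. F i)"
    unfolding F_def by (auto split: if_splits)
  then have "haus_outer s (A \<union> B) \<le> (\<Sum>i. haus_outer s (F i))"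
    by (metis haus_outer_countably_subadditive)
  also have "\<dots> = (\<Sum>i<2. haus_outer s (F i))"
    by (rule suminf_finite) (auto simp: F_def haus_outer_empty)
  finally show ?thesis
    by (simp add: F_def numeral_2_eq_2)
qed

lemma haus_outer_null_subset: "haus_outer s B = 0 \<Longrightarrow> A \<subseteq> B \<Longrightarrow> haus_outer s A = 0"
  using haus_outer_mono[of A B s] by simp

lemma haus_outer_null_UN:
  fixes A :: "nat \<Rightarrow> 'a::metric_space set"
  shows "(\<And>i. haus_outer s (A i) = 0) \<Longrightarrow> haus_outer s (\<Union>i. A i) = 0"
  using haus_outer_countably_subadditive[of s A] by simp

lemma haus_outer_null_finite_UN:
  "finite I \<Longrightarrow> (\<And>i. i \<in> I \<Longrightarrow> haus_outer s (A i) = 0) \<Longrightarrow> haus_outer s (\<Union>i\<in>I. A i) = 0"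
proof (induction I rule: finite_induct)
  case (insert i I)
  then show ?case
    using haus_outer_Un_le[of s "A i" "\<Union>i\<in>I. A i"] by simp
qed (simp add: haus_outer_empty)

lemma haus_outer_null_imp_null_sets:
  assumes "haus_outer s N = 0"
  shows "N \<in> null_sets (hausdorff_measure s)"
proof -
  let ?C = "{A. \<forall>T. haus_outer s T = haus_outer s (T \<inter> A) + haus_outer s (T - A)}"
  have "haus_outer s T = haus_outer s (T \<inter> N) + haus_outer s (T - N)" for T
  proof (rule antisym)
    have "haus_outer s T \<le> haus_outer s ((T - N) \<union> N)"
      by (rule haus_outer_mono) auto
    also have "\<dots> \<le> haus_outer s (T - N)"
      using haus_outer_Un_le[of s "T - N" N] assms by simp
    finally show "haus_outer s T \<le> haus_outer s (T \<inter> N) + haus_outer s (T - N)"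
      using haus_outer_null_subset[OF assms, of "T \<inter> N"] by simp
    show "haus_outer s (T \<inter> N) + haus_outer s (T - N) \<le> haus_outer s T"
      using haus_outer_null_subset[OF assms, of "T \<inter> N"] by (simp add: haus_outer_mono)
  qed
  then have "N \<in> sigma_sets UNIV ?C"
    by (intro sigma_sets.Basic) blast
  then show ?thesis
    using assms unfolding hausdorff_measure_def null_sets_def
    by (simp add: sets_measure_of_conv emeasure_measure_of_conv)
qed

section \<open>Lipschitz and co-Lipschitz images of cubes\<close>

definition cube :: "'j set \<Rightarrow> ('j \<Rightarrow> real) \<Rightarrow> real \<Rightarrow> ('j \<Rightarrow> real) set" where
  "cube J c r = PiE J (\<lambda>j. {c j - r .. c j + r})"

definition dist_l1 :: "'j set \<Rightarrow> ('j \<Rightarrow> real) \<Rightarrow> ('j \<Rightarrow> real) \<Rightarrow> real" where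
  "dist_l1 J p q = (\<Sum>j\<in>J. \<bar>p j - q j\<bar>)"

lemma dist_l1_nonneg: "dist_l1 J p q \<ge> 0"
  unfolding dist_l1_def by (rule sum_nonneg) auto

lemma abs_diff_le_dist_l1: "finite J \<Longrightarrow> j \<in> J \<Longrightarrow> \<bar>p j - q j\<bar> \<le> dist_l1 J p q"
  unfolding dist_l1_def by (rule member_le_sum) auto

lemma dist_l1_le: "(\<And>j. j \<in> J \<Longrightarrow> \<bar>p j - q j\<bar> \<le> d) \<Longrightarrow> dist_l1 J p q \<le> real (card J) * d"
  unfolding dist_l1_def using sum_bounded_above[of J "\<lambda>j. \<bar>p j - q j\<bar>" d] by simp

lemma mem_cube_iff: "p \<in> cube J c r \<longleftrightarrow> p \<in> extensional J \<and> (\<forall>j\<in>J. \<bar>p j - c j\<bar> \<le> r)"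
  unfolding cube_def by (auto simp: PiE_iff abs_le_iff)

lemma mem_cube_bound: "p \<in> cube J c r \<Longrightarrow> j \<in> J \<Longrightarrow> \<bar>p j - c j\<bar> \<le> r"
  unfolding mem_cube_iff by blast

lemma dist_l1_cube: "p \<in> cube J c r \<Longrightarrow> q \<in> cube J c r \<Longrightarrow> dist_l1 J p q \<le> real (card J) * (2 * r)"
  unfolding mem_cube_iff by (intro dist_l1_le) (smt (verit))

lemma grid_index_exists:
  fixes x :: real
  assumes "0 \<le> x" "x \<le> 1" "M \<ge> 1"
  shows "\<exists>g<M. real g \<le> x * M \<and> x * M \<le> real g + 1"
proof (cases "nat \<lfloor>x * M\<rfloor> < M")
  case True
  then show ?thesis
    using assms by (intro exI[of _ "nat \<lfloor>x * M\<rfloor>"]) (auto simp: of_nat_nat)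
next
  case False
  then have "x * M = M"
    using assms mult_left_le_one_le[of M x] by linarith
  then show ?thesis
    using assms by (intro exI[of _ "M - 1"]) (auto simp: of_nat_diff)
qed

lemma cube_subset_UN_subcubes:
  fixes M :: nat and r :: real
  assumes "r > 0" "M \<ge> 1"
  shows "cube J c r \<subseteq> (\<Union>g \<in> PiE J (\<lambda>_. {..<M}). cube J (\<lambda>j. c j - r + (2 * real (g j) + 1) * r / M) (r / M))"
proof
  fix p assume p: "p \<in> cube J c r"
  have "\<exists>g<M. real g \<le> (p j - c j + r) / (2 * r) * M \<and> (p j - c j + r) / (2 * r) * M \<le> real g + 1"
    if "j \<in> J" for j
    using p that assms by (intro grid_index_exists) (auto simp: mem_cube_iff field_simps)
  then obtain g where g: "\<And>j. j \<in> J \<Longrightarrow> g j < M \<and> real (g j) \<le> (p j - c j + r) / (2 * r) * M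
      \<and> (p j - c j + r) / (2 * r) * M \<le> real (g j) + 1"
    by metis
  have "\<bar>p j - (c j - r + (2 * real (restrict g J j) + 1) * r / M)\<bar> \<le> r / M" if "j \<in> J" for j
    using g[OF that] that assms by (simp add: abs_le_iff field_simps)
  then have "p \<in> cube J (\<lambda>j. c j - r + (2 * real (restrict g J j) + 1) * r / M) (r / M)"
    using p by (simp add: mem_cube_iff)
  moreover have "restrict g J \<in> PiE J (\<lambda>_. {..<M})"
    using g by auto
  ultimately show "p \<in> (\<Union>g \<in> PiE J (\<lambda>_. {..<M}). cube J (\<lambda>j. c j - r + (2 * real (g j) + 1) * r / M) (r / M))"
    by blast
qed

lemma haus_const_pos: "s \<ge> 0 \<Longrightarrow> haus_const s > 0"
  unfolding haus_const_def by (intro divide_pos_pos) auto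

lemma haus_content_nonneg: "s \<ge> 0 \<Longrightarrow> haus_content s C \<ge> 0"
  unfolding haus_content_def using haus_const_pos[of s] by auto

lemma haus_content_le:
  assumes "s > 0" "bounded C" "diameter C \<le> d"
  shows "haus_content s C \<le> haus_const s * (d / 2) powr s"
proof -
  have "(diameter C / 2) powr s \<le> (d / 2) powr s"
    using assms diameter_ge_0[of C] by (intro powr_mono2) auto
  then show ?thesis
    using assms haus_const_pos[of s] by (auto simp: haus_content_def intro: mult_left_mono)
qed

definition haus_coeff :: "real \<Rightarrow> real" where
  "haus_coeff s = (if s = 0 then 1 else haus_const s / 2 powr s)"

lemma haus_coeff_pos: "s \<ge> 0 \<Longrightarrow> haus_coeff s > 0"
  unfolding haus_coeff_def using haus_const_pos[of s] by simp

lemma haus_content_ge_diameter_power: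
  assumes "0 \<le> s" "s \<le> real n" "C \<noteq> {}" "bounded C" "diameter C \<le> 1"
  shows "haus_coeff s * diameter C ^ n \<le> haus_content s C"
proof -
  define d where "d = diameter C"
  have d: "0 \<le> d" "d \<le> 1"
    using assms unfolding d_def by (auto intro: diameter_ge_0)
  show ?thesis
  proof (cases "s = 0")
    case True
    then show ?thesis
      using assms d power_le_one[of d n] unfolding haus_content_def haus_coeff_def d_def by simp
  next
    case False
    have "d ^ n \<le> d powr s"
    proof (cases "d = 0")
      case True
      then show ?thesis using False assms by (cases n) auto
    next
      case False
      then show ?thesis
        using d assms by (simp add: powr_realpow[symmetric] powr_mono')
    qed
    then have "haus_const s / 2 powr s * d ^ n \<le> haus_const s * (d / 2) powr s"
      using haus_const_pos[of s] assms d by (simp add: powr_divide field_simps)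
    then show ?thesis
      using False assms unfolding haus_content_def haus_coeff_def d_def by simp
  qed
qed

lemma haus_pre_le_finite_cover:
  assumes "finite G" "A \<subseteq> (\<Union>g\<in>G. C g)" "\<And>g. g \<in> G \<Longrightarrow> bounded (C g) \<and> diameter (C g) \<le> d"
    and "0 \<le> d" "d \<le> \<delta>" "s > 0"
  shows "haus_pre s \<delta> A \<le> ennreal (card G * (haus_const s * (d / 2) powr s))"
proof -
  define N where "N = card G"
  obtain h where h: "bij_betw h {..<N} G"
    unfolding N_def using assms(1) ex_bij_betw_nat_finite lessThan_atLeast0 by metis
  define C' where "C' i = (if i < N then C (h i) else {})" for i
  have C'_bound: "bounded (C' i) \<and> diameter (C' i) \<le> d" for i
    using assms(3,4) bij_betwE[OF h] unfolding C'_def by auto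
  have "A \<subseteq> (\<Union>i<N. C' i)"
    using assms(2) bij_betw_imp_surj_on[OF h] unfolding C'_def by auto
  then have "C' \<in> haus_covers \<delta> A"
    using C'_bound assms(5) unfolding haus_covers_def by (blast intro: order_trans)
  then have "haus_pre s \<delta> A \<le> (\<Sum>i. ennreal (haus_content s (C' i)))"
    by (rule haus_pre_le_cover)
  also have "\<dots> = (\<Sum>i<N. ennreal (haus_content s (C' i)))"
    by (rule suminf_finite) (auto simp: C'_def haus_content_def)
  also have "\<dots> \<le> (\<Sum>i<N. ennreal (haus_const s * (d / 2) powr s))"
    using C'_bound assms(6) by (intro sum_mono ennreal_leI haus_content_le) auto
  also have "\<dots> = ennreal (card G * (haus_const s * (d / 2) powr s))"
    using haus_const_pos[of s] assms(4,6) by (simp add: N_def ennreal_mult ennreal_of_nat_eq_real_of_nat)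
  finally show ?thesis .
qed

lemma bounded_diameter_le:
  fixes S :: "'a::metric_space set"
  assumes "0 \<le> d" "\<And>x y. x \<in> S \<Longrightarrow> y \<in> S \<Longrightarrow> dist x y \<le> d"
  shows "bounded S \<and> diameter S \<le> d"
proof
  show "bounded S"
  proof (cases "S = {}")
    case False
    then obtain x where "x \<in> S"
      by blast
    then show ?thesis
      using assms(2) unfolding bounded_def by blast
  qed simp
  show "diameter S \<le> d"
    using assms unfolding diameter_def by (auto intro!: cSUP_least)
qed

lemma haus_pre_lipschitz_image_cube_le:
  fixes \<phi> :: "('j \<Rightarrow> real) \<Rightarrow> 'b::metric_space" and M :: nat
  assumes J: "finite J" and r: "r > 0" and L: "L \<ge> 0"
    and lip: "\<And>p q. p \<in> cube J c r \<Longrightarrow> q \<in> cube J c r \<Longrightarrow> dist (\<phi> p) (\<phi> q) \<le> L * dist_l1 J p q"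
    and s: "s > 0" and M: "M \<ge> 1" and \<delta>: "2 * L * card J * r / M \<le> \<delta>"
  shows "haus_pre s \<delta> (\<phi> ` cube J c r)
    \<le> ennreal (haus_const s * (L * card J * r) powr s * real M powr (real (card J) - s))"
proof -
  define d where "d = 2 * L * card J * r / M"
  define G where "G = PiE J (\<lambda>_. {..<M})"
  define centre where "centre g j = c j - r + (2 * real (g j) + 1) * r / M" for g j
  define C where "C g = \<phi> ` (cube J c r \<inter> cube J (centre g) (r / M))" for g
  have d: "0 \<le> d"
    unfolding d_def using L r by simp
  have "dist (\<phi> p) (\<phi> q) \<le> d" if "p \<in> cube J c r \<inter> cube J (centre g) (r / M)"
    and "q \<in> cube J c r \<inter> cube J (centre g) (r / M)" for g p q
  proof -
    have "dist (\<phi> p) (\<phi> q) \<le> L * dist_l1 J p q"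
      using that lip by blast
    also have "\<dots> \<le> L * (card J * (2 * (r / M)))"
      using that L dist_l1_cube[of p J "centre g" "r / M" q] by (intro mult_left_mono) auto
    finally show ?thesis
      by (simp add: d_def mult_ac)
  qed
  then have "bounded (C g) \<and> diameter (C g) \<le> d" for g
    using d unfolding C_def by (intro bounded_diameter_le) auto
  moreover have "\<phi> ` cube J c r \<subseteq> (\<Union>g\<in>G. C g)"
    using cube_subset_UN_subcubes[OF r M, of J c] unfolding G_def C_def centre_def by blast
  moreover have "finite G"
    unfolding G_def using J by (simp add: finite_PiE)
  ultimately have "haus_pre s \<delta> (\<phi> ` cube J c r) \<le> ennreal (card G * (haus_const s * (d / 2) powr s))"
    using d \<delta> s unfolding d_def by (intro haus_pre_le_finite_cover) auto
  also have "card G * (haus_const s * (d / 2) powr s)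
      = haus_const s * (L * card J * r) powr s * real M powr (real (card J) - s)"
    using J M L r
    by (simp add: G_def d_def card_PiE powr_realpow[symmetric] powr_divide powr_diff powr_mult mult_ac)
  finally show ?thesis .
qed

lemma haus_outer_lipschitz_image_cube_eq_0:
  fixes \<phi> :: "('j \<Rightarrow> real) \<Rightarrow> 'b::metric_space"
  assumes J: "finite J" and r: "r > 0" and L: "L \<ge> 0"
    and lip: "\<And>p q. p \<in> cube J c r \<Longrightarrow> q \<in> cube J c r \<Longrightarrow> dist (\<phi> p) (\<phi> q) \<le> L * dist_l1 J p q"
    and s: "s > real (card J)"
  shows "haus_outer s (\<phi> ` cube J c r) = 0"
proof -
  define bound where "bound M = haus_const s * (L * card J * r) powr s * real M powr (real (card J) - s)"
    for M :: nat
  have small: "haus_pre s \<delta> (\<phi> ` cube J c r) \<le> 0 + ennreal \<epsilon>"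
    if \<delta>: "\<delta> > 0" and \<epsilon>: "\<epsilon> > 0" for \<delta> \<epsilon> :: real
  proof -
    have "bound \<longlonglongrightarrow> 0"
      unfolding bound_def using s filterlim_real_sequentially
      by (intro tendsto_mult_right_zero tendsto_neg_powr) auto
    then have "eventually (\<lambda>M. bound M < \<epsilon> \<and> M \<ge> nat \<lceil>2 * L * card J * r / \<delta>\<rceil> + 1) sequentially"
      using \<epsilon> by (intro eventually_conj order_tendstoD(2) eventually_ge_at_top)
    then obtain M where M: "bound M < \<epsilon>" "M \<ge> nat \<lceil>2 * L * card J * r / \<delta>\<rceil> + 1"
      unfolding eventually_sequentially by blast
    then have "M \<ge> 1" "2 * L * card J * r / \<delta> \<le> M"
      by linarith+
    moreover have "s > 0"
      using s by (simp add: le_less_trans)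
    ultimately have "haus_pre s \<delta> (\<phi> ` cube J c r) \<le> ennreal (bound M)"
      unfolding bound_def using J r L lip \<delta> by (intro haus_pre_lipschitz_image_cube_le) (simp_all add: field_simps)
    then show ?thesis
      using M(1) by (simp add: order_trans[OF _ ennreal_leI])
  qed
  have "haus_pre s \<delta> (\<phi> ` cube J c r) \<le> 0" if "\<delta> > 0" for \<delta>
    by (rule ennreal_le_epsilon) (rule small[OF that])
  then show ?thesis
    unfolding haus_outer_def by (intro antisym SUP_least) auto
qed

lemma emeasure_cube:
  assumes "finite J" "r \<ge> 0"
  shows "emeasure (PiM J (\<lambda>_. lborel)) (cube J c r) = ennreal ((2 * r) ^ card J)"
proof -
  interpret product_sigma_finite "\<lambda>_. lborel :: real measure"
    by standard
  have "emeasure (PiM J (\<lambda>_. lborel)) (cube J c r) = (\<Prod>j\<in>J. emeasure lborel {c j - r .. c j + r})"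
    unfolding cube_def using assms by (subst emeasure_PiM) auto
  also have "\<dots> = ennreal ((2 * r) ^ card J)"
    using assms by (simp add: prod_ennreal ennreal_power)
  finally show ?thesis .
qed

lemma colipschitz_preimage_subset_cube:
  assumes J: "finite J" and K: "K \<ge> 0"
    and colip: "\<And>p q. p \<in> X \<Longrightarrow> q \<in> X \<Longrightarrow> dist_l1 J p q \<le> K * dist (\<phi> p) (\<phi> q)"
    and p0: "p0 \<in> X" "\<phi> p0 \<in> C" and C: "bounded C" and X: "X \<subseteq> extensional J"
  shows "{p \<in> X. \<phi> p \<in> C} \<subseteq> cube J p0 (K * diameter C)"
proof
  fix p assume p: "p \<in> {p \<in> X. \<phi> p \<in> C}"
  have "\<bar>p j - p0 j\<bar> \<le> K * diameter C" if "j \<in> J" for j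
  proof -
    have "\<bar>p j - p0 j\<bar> \<le> dist_l1 J p p0"
      using J that by (rule abs_diff_le_dist_l1)
    also have "\<dots> \<le> K * dist (\<phi> p) (\<phi> p0)"
      using colip p p0 by auto
    also have "\<dots> \<le> K * diameter C"
      using K p p0 C by (intro mult_left_mono diameter_bounded_bound) auto
    finally show ?thesis .
  qed
  then show "p \<in> cube J p0 (K * diameter C)"
    using p X by (auto simp: mem_cube_iff)
qed

lemma emeasure_cube_le_haus_content:
  assumes J: "finite J" and K: "K \<ge> 0" and s: "0 \<le> s" "s \<le> real (card J)"
    and C: "C \<noteq> {}" "bounded C" "diameter C \<le> 1"
  shows "emeasure (PiM J (\<lambda>_. lborel)) (cube J p0 (K * diameter C))
    \<le> ennreal ((2 * K) ^ card J / haus_coeff s) * ennreal (haus_content s C)"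
proof -
  let ?n = "card J"
  have \<kappa>: "haus_coeff s > 0"
    using haus_coeff_pos[OF s(1)] .
  have "(2 * K) ^ ?n / haus_coeff s * (haus_coeff s * diameter C ^ ?n)
      \<le> (2 * K) ^ ?n / haus_coeff s * haus_content s C"
    using haus_content_ge_diameter_power[OF s C] K \<kappa> by (intro mult_left_mono) auto
  then have "(2 * (K * diameter C)) ^ ?n \<le> (2 * K) ^ ?n / haus_coeff s * haus_content s C"
    using \<kappa> by (simp add: power_mult_distrib)
  then have "emeasure (PiM J (\<lambda>_. lborel)) (cube J p0 (K * diameter C))
      \<le> ennreal ((2 * K) ^ ?n / haus_coeff s * haus_content s C)"
    using J K diameter_ge_0[OF C(2)] by (simp add: emeasure_cube ennreal_leI)
  also have "\<dots> = ennreal ((2 * K) ^ ?n / haus_coeff s) * ennreal (haus_content s C)"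
    using K \<kappa> haus_content_nonneg[OF s(1)] by (intro ennreal_mult) auto
  finally show ?thesis .
qed

lemma volume_cube_le_haus_cover:
  fixes \<phi> :: "('j \<Rightarrow> real) \<Rightarrow> 'b::metric_space"
  assumes J: "finite J" and r: "r > 0" and K: "K > 0"
    and colip: "\<And>p q. p \<in> cube J c r \<Longrightarrow> q \<in> cube J c r \<Longrightarrow> dist_l1 J p q \<le> K * dist (\<phi> p) (\<phi> q)"
    and s: "0 \<le> s" "s \<le> real (card J)"
    and C: "C \<in> haus_covers 1 (\<phi> ` cube J c r)"
  shows "ennreal ((2 * r) ^ card J) \<le> ennreal ((2 * K) ^ card J / haus_coeff s) * (\<Sum>i. ennreal (haus_content s (C i)))"
proof -
  define \<mu> where "\<mu> = PiM J (\<lambda>_. lborel :: real measure)"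
  define X where "X = cube J c r"
  define Q where "Q i = (if \<exists>p\<in>X. \<phi> p \<in> C i
    then cube J (SOME p. p \<in> X \<and> \<phi> p \<in> C i) (K * diameter (C i)) else {})" for i
  have C_i: "bounded (C i)" "diameter (C i) \<le> 1" for i
    using C unfolding haus_covers_def by auto
  have Q_sets: "Q i \<in> sets \<mu>" for i
    unfolding Q_def \<mu>_def cube_def using J by (auto intro!: sets_PiM_I_finite)
  have X_subset_Q: "X \<subseteq> (\<Union>i. Q i)"
  proof
    fix p assume p: "p \<in> X"
    then obtain i where i: "\<phi> p \<in> C i"
      using C unfolding haus_covers_def X_def by blast
    define p0 where "p0 = (SOME p. p \<in> X \<and> \<phi> p \<in> C i)"
    have ex: "\<exists>p\<in>X. \<phi> p \<in> C i"
      using p i by blast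
    then have "p0 \<in> X" "\<phi> p0 \<in> C i"
      unfolding p0_def by (metis (mono_tags, lifting) someI_ex)+
    then have "{p \<in> X. \<phi> p \<in> C i} \<subseteq> cube J p0 (K * diameter (C i))"
      using J K C_i colip unfolding X_def
      by (intro colipschitz_preimage_subset_cube) (auto simp: cube_def PiE_iff)
    then show "p \<in> (\<Union>i. Q i)"
      using ex p i unfolding Q_def p0_def by auto
  qed
  have Q_measure: "emeasure \<mu> (Q i) \<le> ennreal ((2 * K) ^ card J / haus_coeff s) * ennreal (haus_content s (C i))" for i
  proof (cases "\<exists>p\<in>X. \<phi> p \<in> C i")
    case True
    then have "C i \<noteq> {}"
      by blast
    then show ?thesis
      unfolding Q_def if_P[OF True] \<mu>_def using J K s C_i by (intro emeasure_cube_le_haus_content) auto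
  qed (simp add: Q_def)
  have "ennreal ((2 * r) ^ card J) = emeasure \<mu> X"
    unfolding \<mu>_def X_def using J r by (simp add: emeasure_cube)
  also have "\<dots> \<le> emeasure \<mu> (\<Union>i. Q i)"
    using X_subset_Q Q_sets by (intro emeasure_mono) auto
  also have "\<dots> \<le> (\<Sum>i. emeasure \<mu> (Q i))"
    using Q_sets by (intro emeasure_subadditive_countably) auto
  also have "\<dots> \<le> (\<Sum>i. ennreal ((2 * K) ^ card J / haus_coeff s) * ennreal (haus_content s (C i)))"
    by (intro suminf_le Q_measure) auto
  finally show ?thesis
    by simp
qed

lemma haus_outer_colipschitz_image_cube_neq_0:
  fixes \<phi> :: "('j \<Rightarrow> real) \<Rightarrow> 'b::metric_space"
  assumes J: "finite J" and r: "r > 0" and K: "K > 0"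
    and colip: "\<And>p q. p \<in> cube J c r \<Longrightarrow> q \<in> cube J c r \<Longrightarrow> dist_l1 J p q \<le> K * dist (\<phi> p) (\<phi> q)"
    and s: "0 \<le> s" "s \<le> real (card J)"
  shows "haus_outer s (\<phi> ` cube J c r) \<noteq> 0"
proof -
  define A where "A = (2 * K) ^ card J / haus_coeff s"
  have A: "A > 0"
    unfolding A_def using K haus_coeff_pos[OF s(1)] by simp
  have "ennreal ((2 * r) ^ card J / A) \<le> haus_pre s 1 (\<phi> ` cube J c r)"
    unfolding haus_pre_eq_INF_covers
  proof (rule INF_greatest)
    fix C
    assume C: "C \<in> haus_covers 1 (\<phi> ` cube J c r)"
    have "ennreal A * ennreal ((2 * r) ^ card J / A) = ennreal ((2 * r) ^ card J)"
      using A r by (simp add: ennreal_mult[symmetric])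
    also have "\<dots> \<le> ennreal A * (\<Sum>i. ennreal (haus_content s (C i)))"
      unfolding A_def using volume_cube_le_haus_cover[where \<phi>=\<phi> and c=c, OF J r K colip s C] .
    finally have "ennreal A * ennreal ((2 * r) ^ card J / A) \<le> ennreal A * (\<Sum>i. ennreal (haus_content s (C i)))" .
    then show "ennreal ((2 * r) ^ card J / A) \<le> (\<Sum>i. ennreal (haus_content s (C i)))"
      using A by (subst (asm) ennreal_mult_le_mult_iff) auto
  qed
  also have "\<dots> \<le> haus_outer s (\<phi> ` cube J c r)"
    by (rule haus_pre_le_haus_outer) simp
  finally show ?thesis
    using A r by auto
qed

section \<open>Column bases of real matrices\<close>

definition lin_indep_cols_on :: "nat set \<Rightarrow> (nat \<Rightarrow> nat \<Rightarrow> real) \<Rightarrow> nat set \<Rightarrow> bool" where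
  "lin_indep_cols_on R M S \<longleftrightarrow> (\<forall>u. (\<forall>r\<in>R. (\<Sum>j\<in>S. u j * M r j) = 0) \<longrightarrow> (\<forall>j\<in>S. u j = 0))"

lemma lin_indep_cols_eq_on: "lin_indep_cols m M S = lin_indep_cols_on {..<m} M S"
  unfolding lin_indep_cols_def lin_indep_cols_on_def by auto

lemma lin_indep_cols_on_drop_zero_row:
  assumes "lin_indep_cols_on (insert \<rho> R) M S" "\<forall>j\<in>S. M \<rho> j = 0"
  shows "lin_indep_cols_on R M S"
  using assms unfolding lin_indep_cols_on_def by simp

lemma lin_indep_cols_on_eliminate:
  assumes indep: "lin_indep_cols_on (insert \<rho> R) M S"
    and j0: "j0 \<in> S" "M \<rho> j0 \<noteq> 0" and S: "finite S"
  shows "lin_indep_cols_on R (\<lambda>r j. M r j - M \<rho> j / M \<rho> j0 * M r j0) (S - {j0})"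
  unfolding lin_indep_cols_on_def
proof (intro allI impI)
  let ?S' = "S - {j0}"
  fix u
  assume u: "\<forall>r\<in>R. (\<Sum>j\<in>?S'. u j * (M r j - M \<rho> j / M \<rho> j0 * M r j0)) = 0"
  define u' where "u' j = (if j = j0 then - (\<Sum>i\<in>?S'. u i * M \<rho> i) / M \<rho> j0 else u j)" for j
  have "(\<Sum>j\<in>S. u' j * M r j) = u' j0 * M r j0 + (\<Sum>j\<in>?S'. u j * M r j)" for r
    using S j0 by (simp add: sum.remove u'_def)
  moreover have "u' j0 * M r j0 = - ((\<Sum>j\<in>?S'. u j * M \<rho> j) * (M r j0 / M \<rho> j0))" for r
    by (simp add: u'_def)
  moreover have "(\<Sum>j\<in>?S'. u j * (M r j - M \<rho> j / M \<rho> j0 * M r j0))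
      = (\<Sum>j\<in>?S'. u j * M r j) - (\<Sum>j\<in>?S'. u j * M \<rho> j) * (M r j0 / M \<rho> j0)" for r
    by (simp add: sum_subtractf sum_distrib_left sum_distrib_right sum_divide_distrib right_diff_distrib ac_simps)
  ultimately have "(\<Sum>j\<in>S. u' j * M r j) = (\<Sum>j\<in>?S'. u j * (M r j - M \<rho> j / M \<rho> j0 * M r j0))" for r
    by simp
  moreover have "(\<Sum>j\<in>?S'. u j * (M \<rho> j - M \<rho> j / M \<rho> j0 * M \<rho> j0)) = 0"
    using j0 by simp
  ultimately have "\<forall>r\<in>insert \<rho> R. (\<Sum>j\<in>S. u' j * M r j) = 0"
    using u by simp
  then have "\<forall>j\<in>S. u' j = 0"
    using indep unfolding lin_indep_cols_on_def by blast
  then show "\<forall>j\<in>?S'. u j = 0"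
    unfolding u'_def by (metis DiffD1 DiffD2 singletonI)
qed

lemma card_le_card_rows_if_lin_indep_cols_on:
  assumes "finite R" "finite S" "lin_indep_cols_on R M S"
  shows "card S \<le> card R"
  using assms
proof (induction R arbitrary: S M rule: finite_induct)
  case empty
  have "\<forall>j\<in>S. (1::real) = 0"
    using spec[OF empty.prems(2)[unfolded lin_indep_cols_on_def], of "\<lambda>_. 1"] by simp
  then show ?case
    by simp
next
  case (insert \<rho> R)
  show ?case
  proof (cases "\<forall>j\<in>S. M \<rho> j = 0")
    case True
    then have "card S \<le> card R"
      using insert lin_indep_cols_on_drop_zero_row by blast
    then show ?thesis
      using insert.hyps by simp
  next
    case False
    then obtain j0 where j0: "j0 \<in> S" "M \<rho> j0 \<noteq> 0"
      by blast
    have "card (S - {j0}) \<le> card R"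
      using insert.prems(1)
      by (intro insert.IH[OF _ lin_indep_cols_on_eliminate[OF insert.prems(2) j0 insert.prems(1)]]) simp
    then show ?thesis
      using insert \<open>j0 \<in> S\<close> by (simp add: card_Diff1_le)
  qed
qed

definition echelon :: "nat set \<Rightarrow> (nat \<Rightarrow> nat \<Rightarrow> real) \<Rightarrow> nat \<Rightarrow> nat \<Rightarrow> real" where
  "echelon S P t c = (if c \<in> S then (if t = c then 1 else 0) else P t c)"

lemma sum_mult_echelon_pivot:
  assumes "finite S" "c \<in> S"
  shows "(\<Sum>t\<in>S. v t * echelon S P t c) = v c"
proof -
  have "(\<Sum>t\<in>S. v t * echelon S P t c) = (\<Sum>t\<in>S. if t = c then v t else 0)"
    using assms(2) by (intro sum.cong) (auto simp: echelon_def)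
  then show ?thesis
    using assms by simp
qed

definition column_basis ::
  "nat \<Rightarrow> nat \<Rightarrow> (nat \<Rightarrow> nat \<Rightarrow> real) \<Rightarrow> nat set \<Rightarrow> (nat \<Rightarrow> nat \<Rightarrow> real) \<Rightarrow> bool" where
  "column_basis m k M S P \<longleftrightarrow> S \<subseteq> {..<k} \<and> lin_indep_cols m M S \<and>
     (\<forall>r<m. \<forall>c<k. M r c = (\<Sum>t\<in>S. M r t * echelon S P t c))"

lemma lin_dependent_insert_imp_combination:
  assumes indep: "lin_indep_cols m M S" and dep: "\<not> lin_indep_cols m M (insert c S)"
    and S: "finite S" "c \<notin> S"
  shows "\<exists>f. \<forall>r<m. M r c = (\<Sum>t\<in>S. M r t * f t)"
proof -
  obtain u where u: "\<forall>r<m. (\<Sum>j\<in>insert c S. u j * M r j) = 0" "\<exists>j\<in>insert c S. u j \<noteq> 0"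
    using dep unfolding lin_indep_cols_def by auto
  have "u c \<noteq> 0"
  proof
    assume "u c = 0"
    then have "\<forall>r<m. (\<Sum>j\<in>S. u j * M r j) = 0"
      using u(1) S by simp
    then show False
      using indep u(2) \<open>u c = 0\<close> unfolding lin_indep_cols_def by auto
  qed
  have "M r c = (\<Sum>t\<in>S. M r t * (- u t / u c))" if "r < m" for r
  proof -
    have "u c * M r c + (\<Sum>j\<in>S. u j * M r j) = 0"
      using u(1) that S by simp
    then show ?thesis
      using \<open>u c \<noteq> 0\<close> by (simp add: sum_divide_distrib[symmetric] sum_negf field_simps)
  qed
  then show ?thesis
    by (intro exI[of _ "\<lambda>t. - u t / u c"]) blast
qed

lemma column_basis_exists: "\<exists>S P. column_basis m k M S P \<and> card S = mat_rank m k M"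
proof -
  define F where "F = {S. S \<subseteq> {..<k} \<and> lin_indep_cols m M S}"
  have "finite F"
    unfolding F_def by (rule finite_subset[of _ "Pow {..<k}"]) auto
  moreover have "{} \<in> F"
    unfolding F_def lin_indep_cols_def by auto
  ultimately obtain S where S: "S \<in> F" "card S = Max (card ` F)"
    by (metis (mono_tags, lifting) Max_in empty_iff finite_imageI image_iff image_is_empty)
  have Sk: "S \<subseteq> {..<k}" and indep: "lin_indep_cols m M S" and finS: "finite S"
    using S(1) finite_subset unfolding F_def by auto
  have dep: "\<not> lin_indep_cols m M (insert c S)" if "c < k" "c \<notin> S" for c
  proof
    assume "lin_indep_cols m M (insert c S)"
    then have "card (insert c S) \<le> Max (card ` F)"
      using \<open>finite F\<close> Sk that unfolding F_def by (intro Max_ge) auto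
    then show False
      using S(2) finS that by simp
  qed
  have "\<exists>f. \<forall>r<m. M r c = (\<Sum>t\<in>S. M r t * f t)" if "c < k" "c \<notin> S" for c
    using lin_dependent_insert_imp_combination[OF indep dep[OF that] finS that(2)] .
  then obtain f where f: "\<And>c. c < k \<Longrightarrow> c \<notin> S \<Longrightarrow> \<forall>r<m. M r c = (\<Sum>t\<in>S. M r t * f c t)"
    by metis
  have "M r c = (\<Sum>t\<in>S. M r t * echelon S (\<lambda>t c. f c t) t c)" if "r < m" "c < k" for r c
    using f[OF that(2)] that(1) finS
    by (cases "c \<in> S") (simp_all add: sum_mult_echelon_pivot, simp add: echelon_def)
  then have "column_basis m k M S (\<lambda>t c. f c t)"
    unfolding column_basis_def using Sk indep by auto
  moreover have "card S = mat_rank m k M"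
    unfolding mat_rank_def S(2) F_def by simp
  ultimately show ?thesis
    by blast
qed

lemma column_basis_card_le_rows: "column_basis m k M S P \<Longrightarrow> card S \<le> m"
  unfolding column_basis_def lin_indep_cols_eq_on
  using card_le_card_rows_if_lin_indep_cols_on[of "{..<m}" S M] finite_subset[of S "{..<k}"] by auto

lemma sum_echelon_row:
  assumes "t \<in> S" "S \<subseteq> {..<k}"
  shows "(\<Sum>j<k. echelon S P t j * v j) = v t + (\<Sum>j\<in>{..<k} - S. P t j * v j)"
proof -
  have "(\<Sum>j<k. echelon S P t j * v j) = (\<Sum>j\<in>S. echelon S P t j * v j) + (\<Sum>j\<in>{..<k} - S. echelon S P t j * v j)"
    using assms(2) by (metis add.commute finite_lessThan sum.subset_diff)
  also have "(\<Sum>j\<in>S. echelon S P t j * v j) = (\<Sum>j\<in>S. if j = t then v j else 0)"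
    unfolding echelon_def by (intro sum.cong) auto
  also have "\<dots> = v t"
    using assms finite_subset[OF assms(2)] by simp
  also have "(\<Sum>j\<in>{..<k} - S. echelon S P t j * v j) = (\<Sum>j\<in>{..<k} - S. P t j * v j)"
    unfolding echelon_def by (intro sum.cong) auto
  finally show ?thesis .
qed

lemma echelon_mult_eq_0:
  assumes B: "column_basis m k M S P"
    and MN: "\<And>r c. r < m \<Longrightarrow> c < l \<Longrightarrow> (\<Sum>j<k. M r j * N j c) = 0"
    and t: "t \<in> S" and c: "c < l"
  shows "(\<Sum>j<k. echelon S P t j * N j c) = 0"
proof -
  have indep: "lin_indep_cols m M S"
    and factor: "\<And>r c. r < m \<Longrightarrow> c < k \<Longrightarrow> M r c = (\<Sum>t\<in>S. M r t * echelon S P t c)"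
    using B unfolding column_basis_def by auto
  define u where "u t = (\<Sum>j<k. echelon S P t j * N j c)" for t
  have "(\<Sum>t\<in>S. u t * M r t) = (\<Sum>j<k. M r j * N j c)" if "r < m" for r
  proof -
    have "(\<Sum>t\<in>S. u t * M r t) = (\<Sum>j<k. (\<Sum>t\<in>S. M r t * echelon S P t j) * N j c)"
      unfolding u_def by (simp add: sum_distrib_left sum_distrib_right sum.swap[of _ S] ac_simps)
    also have "\<dots> = (\<Sum>j<k. M r j * N j c)"
      using factor that by simp
    finally show ?thesis .
  qed
  then have "\<forall>t\<in>S. u t = 0"
    using indep MN c unfolding lin_indep_cols_def by simp
  then show ?thesis
    using t unfolding u_def by simp
qed

lemma column_basis_kernel_row:
  assumes B: "column_basis m k M S P"
    and MN: "\<And>r c. r < m \<Longrightarrow> c < l \<Longrightarrow> (\<Sum>j<k. M r j * N j c) = 0"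
    and t: "t \<in> S" and c: "c < l"
  shows "N t c = - (\<Sum>j\<in>{..<k} - S. P t j * N j c)"
  using echelon_mult_eq_0[of m k M S P l N, OF B MN t c] sum_echelon_row[OF t, of k P "\<lambda>j. N j c"] B
  unfolding column_basis_def by simp

lemma card_column_basis_add_le:
  assumes B: "column_basis m k M S P"
    and MN: "\<And>r c. r < m \<Longrightarrow> c < l \<Longrightarrow> (\<Sum>j<k. M r j * N j c) = 0"
    and S': "S' \<subseteq> {..<l}" "lin_indep_cols k N S'"
  shows "card S + card S' \<le> k"
proof -
  have Sk: "S \<subseteq> {..<k}"
    using B unfolding column_basis_def by auto
  have "lin_indep_cols_on ({..<k} - S) N S'"
    unfolding lin_indep_cols_on_def
  proof (intro allI impI)
    fix u
    assume u: "\<forall>r\<in>{..<k} - S. (\<Sum>j\<in>S'. u j * N r j) = 0"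
    have "(\<Sum>j\<in>S'. u j * N t j) = 0" if "t \<in> S" for t
    proof -
      have "(\<Sum>j\<in>S'. u j * N t j) = (\<Sum>j\<in>S'. u j * - (\<Sum>i\<in>{..<k} - S. P t i * N i j))"
        using column_basis_kernel_row[of m k M S P l N, OF B MN that] S' by (intro sum.cong) auto
      also have "\<dots> = - (\<Sum>i\<in>{..<k} - S. P t i * (\<Sum>j\<in>S'. u j * N i j))"
        by (simp add: sum_distrib_left sum_negf sum.swap[of _ S'] ac_simps)
      finally show ?thesis
        using u by simp
    qed
    then have "\<forall>r<k. (\<Sum>j\<in>S'. u j * N r j) = 0"
      using u by blast
    then show "\<forall>j\<in>S'. u j = 0"
      using S' unfolding lin_indep_cols_def by blast
  qed
  then have "card S' \<le> card ({..<k} - S)"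
    using S' finite_subset by (intro card_le_card_rows_if_lin_indep_cols_on) auto
  also have "\<dots> = k - card S"
    using Sk by (simp add: card_Diff_subset finite_subset)
  finally show ?thesis
    using Sk card_mono[OF _ Sk] by simp
qed

section \<open>Parametrising chain complexes by pivot columns\<close>

definition mat_mult_on :: "nat set \<Rightarrow> (nat \<Rightarrow> nat \<Rightarrow> real) \<Rightarrow> (nat \<Rightarrow> nat \<Rightarrow> real) \<Rightarrow> nat \<Rightarrow> nat \<Rightarrow> real" where
  "mat_mult_on S A B r c = (\<Sum>t\<in>S. A r t * B t c)"

(* The general solution W of echelon S P * W = 0: rows outside S are free (given by F), rows in S
   are forced. *)
definition echelon_kernel ::
  "nat set \<Rightarrow> nat \<Rightarrow> (nat \<Rightarrow> nat \<Rightarrow> real) \<Rightarrow> (nat \<Rightarrow> nat \<Rightarrow> real) \<Rightarrow> nat \<Rightarrow> nat \<Rightarrow> real" where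
  "echelon_kernel S k P F m s = (if m \<in> S then - (\<Sum>j\<in>{..<k} - S. P m j * F j s) else F m s)"

lemma echelon_mult_echelon_kernel:
  assumes "S \<subseteq> {..<k}" "t \<in> S"
  shows "(\<Sum>j<k. echelon S P t j * echelon_kernel S k P F j s) = 0"
proof -
  have "(\<Sum>j\<in>{..<k} - S. P t j * echelon_kernel S k P F j s) = (\<Sum>j\<in>{..<k} - S. P t j * F j s)"
    unfolding echelon_kernel_def by (intro sum.cong) auto
  then show ?thesis
    using sum_echelon_row[OF assms(2,1)] assms(2) by (simp add: echelon_kernel_def)
qed

lemma sum_mult_sum_swap:
  fixes f :: "'a \<Rightarrow> real"
  shows "(\<Sum>j\<in>A. f j * (\<Sum>s\<in>B. g j s * h s)) = (\<Sum>s\<in>B. (\<Sum>j\<in>A. f j * g j s) * h s)"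
proof -
  have "(\<Sum>j\<in>A. f j * (\<Sum>s\<in>B. g j s * h s)) = (\<Sum>j\<in>A. \<Sum>s\<in>B. f j * g j s * h s)"
    by (simp add: sum_distrib_left mult.assoc)
  also have "\<dots> = (\<Sum>s\<in>B. \<Sum>j\<in>A. f j * g j s * h s)"
    by (rule sum.swap)
  also have "\<dots> = (\<Sum>s\<in>B. (\<Sum>j\<in>A. f j * g j s) * h s)"
    by (simp add: sum_distrib_right)
  finally show ?thesis .
qed

lemma mat_mult_on_echelon_mult_eq_0:
  assumes "S \<subseteq> {..<k}"
  shows "(\<Sum>j<k. mat_mult_on S W (echelon S P) r j * mat_mult_on S' (echelon_kernel S k P F) U j c) = 0"
proof -
  have "(\<Sum>j<k. mat_mult_on S W (echelon S P) r j * mat_mult_on S' (echelon_kernel S k P F) U j c)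
      = (\<Sum>t\<in>S. W r t * (\<Sum>j<k. echelon S P t j * mat_mult_on S' (echelon_kernel S k P F) U j c))"
    unfolding mat_mult_on_def[of S] by (rule sum_mult_sum_swap[symmetric])
  also have "\<dots> = (\<Sum>t\<in>S. W r t * (\<Sum>s\<in>S'. (\<Sum>j<k. echelon S P t j * echelon_kernel S k P F j s) * U s c))"
    unfolding mat_mult_on_def by (simp add: sum_mult_sum_swap)
  also have "\<dots> = 0"
    using echelon_mult_echelon_kernel[OF assms] by simp
  finally show ?thesis .
qed

(* S i is meant to be a set of pivot columns of d_i; S 0 = {} since nothing constrains the rows of d_1. *)
definition pivot_sets :: "(nat \<Rightarrow> nat) \<Rightarrow> (nat \<Rightarrow> nat set) \<Rightarrow> bool" where
  "pivot_sets a S \<longleftrightarrow> S 0 = {} \<and> (\<forall>i. S i \<subseteq> {..<a i})"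

(* Coordinates (i, False, m, s) are the entries of W_i in the rows m outside S (i - 1);
   coordinates (i, True, t, c) are the echelon coefficients of U_i in the non-pivot columns c.
   The rows of W_i in S (i - 1) are not coordinates: echelon_kernel computes them. *)
definition param_index :: "nat \<Rightarrow> (nat \<Rightarrow> nat) \<Rightarrow> (nat \<Rightarrow> nat set) \<Rightarrow> (nat \<times> bool \<times> nat \<times> nat) set" where
  "param_index n a S = (\<Union>i\<in>{1..n}. {i} \<times>
     ({False} \<times> (({..<a (i - 1)} - S (i - 1)) \<times> S i) \<union> {True} \<times> (S i \<times> ({..<a i} - S i))))"

lemma mem_param_index:
  "(i, b, r, c) \<in> param_index n a S \<longleftrightarrow> 1 \<le> i \<and> i \<le> n \<and>
     (if b then r \<in> S i \<and> c < a i \<and> c \<notin> S i else r < a (i - 1) \<and> r \<notin> S (i - 1) \<and> c \<in> S i)"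
  unfolding param_index_def by auto

definition param_entry ::
  "nat \<Rightarrow> (nat \<Rightarrow> nat) \<Rightarrow> (nat \<Rightarrow> nat set) \<Rightarrow> (nat \<times> bool \<times> nat \<times> nat \<Rightarrow> real) \<Rightarrow> nat \<Rightarrow> bool \<Rightarrow> nat \<Rightarrow> nat \<Rightarrow> real" where
  "param_entry n a S p i b r c = (if (i, b, r, c) \<in> param_index n a S then p (i, b, r, c) else 0)"

definition param_mat ::
  "nat \<Rightarrow> (nat \<Rightarrow> nat) \<Rightarrow> (nat \<Rightarrow> nat set) \<Rightarrow> (nat \<times> bool \<times> nat \<times> nat \<Rightarrow> real) \<Rightarrow> nat \<Rightarrow> nat \<Rightarrow> nat \<Rightarrow> real" where
  "param_mat n a S p i = mat_mult_on (S i)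
     (echelon_kernel (S (i - 1)) (a (i - 1)) (param_entry n a S p (i - 1) True) (param_entry n a S p i False))
     (echelon (S i) (param_entry n a S p i True))"

definition param_point ::
  "nat \<Rightarrow> (nat \<Rightarrow> nat) \<Rightarrow> ('n::finite \<Rightarrow> nat \<times> nat \<times> nat) \<Rightarrow> (nat \<Rightarrow> nat set)
    \<Rightarrow> (nat \<times> bool \<times> nat \<times> nat \<Rightarrow> real) \<Rightarrow> real^'n" where
  "param_point n a e S p = (\<chi> k. case e k of (i, r, c) \<Rightarrow> param_mat n a S p i r c)"

lemma cc_idx_iff: "(i, r, c) \<in> cc_idx n a \<longleftrightarrow> 1 \<le> i \<and> i \<le> n \<and> r < a (i - 1) \<and> c < a i"
  unfolding cc_idx_def by simp

lemma cc_mat_param_point: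
  assumes "bij_betw e UNIV (cc_idx n a)" "(i, r, c) \<in> cc_idx n a"
  shows "cc_mat n a e (param_point n a e S p) i r c = param_mat n a S p i r c"
  using assms bij_betw_inv_into_right[OF assms(1)] unfolding cc_mat_def param_point_def by simp

lemma param_point_in_cc_variety:
  assumes e: "bij_betw e UNIV (cc_idx n a)" and S: "pivot_sets a S"
  shows "param_point n a e S p \<in> cc_variety n a e"
  unfolding cc_variety_def
proof (intro CollectI allI impI)
  fix i r c
  assume i: "1 \<le> i \<and> i < n" and rc: "r < a (i - 1)" "c < a (i + 1)"
  have "(\<Sum>m<a i. cc_mat n a e (param_point n a e S p) i r m * cc_mat n a e (param_point n a e S p) (i + 1) m c)
      = (\<Sum>m<a i. param_mat n a S p i r m * param_mat n a S p (i + 1) m c)"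
    using i rc by (intro sum.cong refl) (simp add: cc_mat_param_point[OF e] cc_idx_iff)
  also have "\<dots> = 0"
    unfolding param_mat_def using S unfolding pivot_sets_def by (simp add: mat_mult_on_echelon_mult_eq_0)
  finally show "(\<Sum>m<a i. cc_mat n a e (param_point n a e S p) i r m
      * cc_mat n a e (param_point n a e S p) (i + 1) m c) = 0" .
qed

definition param_dim :: "nat \<Rightarrow> (nat \<Rightarrow> nat) \<Rightarrow> (nat \<Rightarrow> nat) \<Rightarrow> nat" where
  "param_dim n a r = (\<Sum>i=1..n. (a (i - 1) - r (i - 1)) * r i + r i * (a i - r i))"

lemma pivot_sets_finite: "pivot_sets a S \<Longrightarrow> finite (S i)"
  unfolding pivot_sets_def by (meson finite_lessThan finite_subset)

lemma finite_param_index: "pivot_sets a S \<Longrightarrow> finite (param_index n a S)"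
  unfolding param_index_def by (simp add: pivot_sets_finite)

lemma card_param_index:
  assumes "pivot_sets a S"
  shows "card (param_index n a S) = param_dim n a (\<lambda>i. card (S i))"
proof -
  have fin: "finite (S i)" for i
    using assms by (rule pivot_sets_finite)
  have "card ({False} \<times> (({..<a (i - 1)} - S (i - 1)) \<times> S i) \<union> {True} \<times> (S i \<times> ({..<a i} - S i)))
      = (a (i - 1) - card (S (i - 1))) * card (S i) + card (S i) * (a i - card (S i))" for i
  proof -
    have "S (i - 1) \<subseteq> {..<a (i - 1)}" "S i \<subseteq> {..<a i}"
      using assms unfolding pivot_sets_def by auto
    then show ?thesis
      using fin by (subst card_Un_disjoint) (auto simp: card_cartesian_product card_Diff_subset)
  qed
  then show ?thesis
    unfolding param_index_def param_dim_def using fin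
    by (subst card_UN_disjoint) (auto simp: card_cartesian_product)
qed

lemma column_basis_mat_mult_on:
  assumes B: "column_basis m k M S P" and rc: "r < m" "c < k"
    and W: "\<And>t. t \<in> S \<Longrightarrow> W r t = M r t" and P': "\<And>t. t \<in> S \<Longrightarrow> c \<notin> S \<Longrightarrow> P' t c = P t c"
  shows "mat_mult_on S W (echelon S P') r c = M r c"
proof -
  have "mat_mult_on S W (echelon S P') r c = (\<Sum>t\<in>S. M r t * echelon S P t c)"
    unfolding mat_mult_on_def using W P' by (intro sum.cong) (auto simp: echelon_def)
  also have "\<dots> = M r c"
    using B rc unfolding column_basis_def by auto
  finally show ?thesis .
qed

lemma cc_variety_mult_eq_0:
  assumes "x \<in> cc_variety n a e" "1 \<le> i" "i < n" "r < a (i - 1)" "c < a (Suc i)"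
  shows "(\<Sum>m<a i. cc_mat n a e x i r m * cc_mat n a e x (Suc i) m c) = 0"
  using assms unfolding cc_variety_def by simp

lemma cc_rank_column_basis:
  "1 \<le> i \<Longrightarrow> i \<le> n \<Longrightarrow>
    \<exists>S P. column_basis (a (i - 1)) (a i) (cc_mat n a e x i) S P \<and> card S = cc_rank n a e x i"
  using column_basis_exists unfolding cc_rank_def by simp

lemma cc_rank_add_le:
  assumes x: "x \<in> cc_variety n a e"
  shows "cc_rank n a e x i + cc_rank n a e x (Suc i) \<le> a i"
proof -
  consider "i = 0" "1 \<le> n" | "1 \<le> i" "i < n" | "1 \<le> i" "i = n" | "i > n \<or> n = 0"
    by linarith
  then show ?thesis
  proof cases
    case 1
    obtain S P where "column_basis (a 0) (a 1) (cc_mat n a e x 1) S P" "card S = cc_rank n a e x 1"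
      using cc_rank_column_basis[of 1 n a e x] 1 by auto
    then show ?thesis
      using 1 column_basis_card_le_rows by (fastforce simp: cc_rank_def)
  next
    case 2
    obtain S P where S: "column_basis (a (i - 1)) (a i) (cc_mat n a e x i) S P" "card S = cc_rank n a e x i"
      using cc_rank_column_basis[of i n a e x] 2 by auto
    obtain S' P' where S': "column_basis (a i) (a (Suc i)) (cc_mat n a e x (Suc i)) S' P'"
      "card S' = cc_rank n a e x (Suc i)"
      using cc_rank_column_basis[of "Suc i" n a e x] 2 by auto
    have "card S + card S' \<le> a i"
      using S'(1) unfolding column_basis_def
      by (intro card_column_basis_add_le[where l="a (Suc i)" and N="cc_mat n a e x (Suc i)",
            OF S(1) cc_variety_mult_eq_0[OF x 2]]) auto
    then show ?thesis
      using S(2) S'(2) by simp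
  next
    case 3
    obtain S P where "column_basis (a (i - 1)) (a i) (cc_mat n a e x i) S P" "card S = cc_rank n a e x i"
      using cc_rank_column_basis[of i n a e x] 3 by auto
    then show ?thesis
      using 3 card_mono[of "{..<a i}" S] unfolding column_basis_def by (simp add: cc_rank_def)
  next
    case 4
    then show ?thesis
      by (auto simp: cc_rank_def)
  qed
qed

definition param_of :: "(nat \<Rightarrow> nat \<Rightarrow> nat \<Rightarrow> real) \<Rightarrow> (nat \<Rightarrow> nat \<Rightarrow> nat \<Rightarrow> real) \<Rightarrow> nat \<times> bool \<times> nat \<times> nat \<Rightarrow> real" where
  "param_of M P = (\<lambda>(i, b, r, c). if b then P i r c else M i r c)"

context
  fixes n :: nat and a :: "nat \<Rightarrow> nat" and M P :: "nat \<Rightarrow> nat \<Rightarrow> nat \<Rightarrow> real" and S :: "nat \<Rightarrow> nat set"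
  assumes S: "pivot_sets a S"
    and B: "\<And>i. 1 \<le> i \<Longrightarrow> i \<le> n \<Longrightarrow> column_basis (a (i - 1)) (a i) (M i) (S i) (P i)"
    and MN: "\<And>i r c. 1 \<le> i \<Longrightarrow> i < n \<Longrightarrow> r < a (i - 1) \<Longrightarrow> c < a (Suc i)
      \<Longrightarrow> (\<Sum>m<a i. M i r m * M (Suc i) m c) = 0"
begin

lemma echelon_kernel_param_of:
  assumes i: "1 \<le> i" "i \<le> n" and m: "m < a (i - 1)" and s: "s \<in> S i"
  shows "echelon_kernel (S (i - 1)) (a (i - 1)) (param_entry n a S (param_of M P) (i - 1) True)
    (param_entry n a S (param_of M P) i False) m s = M i m s"
proof (cases "m \<in> S (i - 1)")
  case True
  then have "i - 1 \<noteq> 0"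
    using S unfolding pivot_sets_def by (metis empty_iff)
  then have i': "1 \<le> i - 1" "i - 1 < n" "Suc (i - 1) = i"
    using i by auto
  have "s < a i"
    using s S unfolding pivot_sets_def by auto
  have "M i m s = - (\<Sum>j\<in>{..<a (i - 1)} - S (i - 1). P (i - 1) m j * M i j s)"
    using column_basis_kernel_row[where l="a i" and N="M i", OF B[OF i'(1) less_imp_le[OF i'(2)]]
        MN[OF i'(1,2), unfolded i'(3)] True \<open>s < a i\<close>] .
  also have "\<dots> = - (\<Sum>j\<in>{..<a (i - 1)} - S (i - 1).
      param_entry n a S (param_of M P) (i - 1) True m j * param_entry n a S (param_of M P) i False j s)"
  proof (intro arg_cong[of _ _ uminus] sum.cong refl)
    fix j
    assume j: "j \<in> {..<a (i - 1)} - S (i - 1)"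
    have "(i - 1, True, m, j) \<in> param_index n a S" "(i, False, j, s) \<in> param_index n a S"
      using i i'(1,2) True s j by (simp_all add: mem_param_index)
    then show "P (i - 1) m j * M i j s
        = param_entry n a S (param_of M P) (i - 1) True m j * param_entry n a S (param_of M P) i False j s"
      by (simp add: param_entry_def param_of_def)
  qed
  finally show ?thesis
    using True by (simp add: echelon_kernel_def)
next
  case False
  then show ?thesis
    using i m s by (simp add: echelon_kernel_def param_entry_def mem_param_index param_of_def)
qed

lemma param_mat_param_of:
  assumes i: "1 \<le> i" "i \<le> n" and rc: "r < a (i - 1)" "c < a i"
  shows "param_mat n a S (param_of M P) i r c = M i r c"
  unfolding param_mat_def using B[OF i] rc echelon_kernel_param_of[OF i rc(1)] i
  by (intro column_basis_mat_mult_on) (auto simp: param_entry_def mem_param_index param_of_def)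

end

lemma cc_variety_eq_param_point:
  assumes e: "bij_betw e UNIV (cc_idx n a)" and x: "x \<in> cc_variety n a e"
  obtains S p where "pivot_sets a S" "\<And>i. card (S i) = cc_rank n a e x i" "x = param_point n a e S p"
proof -
  have "\<exists>S P. column_basis (a (i - 1)) (a i) (cc_mat n a e x i) S P \<and> card S = cc_rank n a e x i"
    if "1 \<le> i" "i \<le> n" for i
    using cc_rank_column_basis[OF that] .
  then obtain SS P where B: "\<And>i. 1 \<le> i \<Longrightarrow> i \<le> n \<Longrightarrow> column_basis (a (i - 1)) (a i) (cc_mat n a e x i) (SS i) (P i)"
    and card_SS: "\<And>i. 1 \<le> i \<Longrightarrow> i \<le> n \<Longrightarrow> card (SS i) = cc_rank n a e x i"
    by metis
  define S where "S i = (if 1 \<le> i \<and> i \<le> n then SS i else {})" for i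
  have S: "pivot_sets a S"
    using B unfolding pivot_sets_def S_def column_basis_def by auto
  have card_S: "card (S i) = cc_rank n a e x i" for i
    using card_SS unfolding S_def by (auto simp: cc_rank_def)
  have B': "column_basis (a (i - 1)) (a i) (cc_mat n a e x i) (S i) (P i)" if "1 \<le> i" "i \<le> n" for i
    using B[OF that] that by (simp add: S_def)
  have mat: "param_mat n a S (param_of (cc_mat n a e x) P) i r c = cc_mat n a e x i r c"
    if "(i, r, c) \<in> cc_idx n a" for i r c
    using that param_mat_param_of[OF S B' cc_variety_mult_eq_0[OF x]] by (simp add: cc_idx_iff)
  have "x $ k = param_point n a e S (param_of (cc_mat n a e x) P) $ k" for k
  proof -
    obtain i r c where ek: "e k = (i, r, c)"
      by (cases "e k")
    then have idx: "(i, r, c) \<in> cc_idx n a"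
      using bij_betwE[OF e] by (metis UNIV_I)
    have "inv e (i, r, c) = k"
      using bij_betw_inv_into_left[OF e] ek by (metis UNIV_I)
    then show ?thesis
      using mat[OF idx] ek idx by (simp add: param_point_def cc_mat_def)
  qed
  then have "x = param_point n a e S (param_of (cc_mat n a e x) P)"
    by (simp add: vec_eq_iff)
  then show ?thesis
    using that S card_S by blast
qed

definition bdd_lipschitz_on :: "'j set \<Rightarrow> ('j \<Rightarrow> real) set \<Rightarrow> (('j \<Rightarrow> real) \<Rightarrow> real) \<Rightarrow> bool" where
  "bdd_lipschitz_on J B f \<longleftrightarrow> (\<exists>L. \<forall>p\<in>B. \<forall>q\<in>B. \<bar>f p\<bar> \<le> L \<and> \<bar>f p - f q\<bar> \<le> L * dist_l1 J p q)"

lemma bdd_lipschitz_on_const: "bdd_lipschitz_on J B (\<lambda>_. k)"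
  unfolding bdd_lipschitz_on_def by (intro exI[of _ "\<bar>k\<bar>"]) (simp add: dist_l1_nonneg)

lemma bdd_lipschitz_on_coord:
  assumes "finite J" "j \<in> J" "\<And>p. p \<in> B \<Longrightarrow> \<bar>p j\<bar> \<le> R"
  shows "bdd_lipschitz_on J B (\<lambda>p. p j)"
  unfolding bdd_lipschitz_on_def
proof (intro exI[of _ "max R 1"] ballI conjI)
  fix p q
  assume "p \<in> B" "q \<in> B"
  then show "\<bar>p j\<bar> \<le> max R 1"
    using assms(3) by force
  have "\<bar>p j - q j\<bar> \<le> 1 * dist_l1 J p q"
    using abs_diff_le_dist_l1[OF assms(1,2)] by simp
  also have "\<dots> \<le> max R 1 * dist_l1 J p q"
    by (intro mult_right_mono dist_l1_nonneg) simp
  finally show "\<bar>p j - q j\<bar> \<le> max R 1 * dist_l1 J p q" .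
qed

lemma bdd_lipschitz_on_add:
  assumes "bdd_lipschitz_on J B f" "bdd_lipschitz_on J B g"
  shows "bdd_lipschitz_on J B (\<lambda>p. f p + g p)"
proof -
  obtain L1 L2 where L1: "\<forall>p\<in>B. \<forall>q\<in>B. \<bar>f p\<bar> \<le> L1 \<and> \<bar>f p - f q\<bar> \<le> L1 * dist_l1 J p q"
    and L2: "\<forall>p\<in>B. \<forall>q\<in>B. \<bar>g p\<bar> \<le> L2 \<and> \<bar>g p - g q\<bar> \<le> L2 * dist_l1 J p q"
    using assms unfolding bdd_lipschitz_on_def by blast
  have "\<bar>f p + g p\<bar> \<le> L1 + L2 \<and> \<bar>f p + g p - (f q + g q)\<bar> \<le> (L1 + L2) * dist_l1 J p q"
    if "p \<in> B" "q \<in> B" for p q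
    using L1 L2 that by (fastforce simp: distrib_right intro: order_trans[OF abs_triangle_ineq] add_mono)
  then show ?thesis
    unfolding bdd_lipschitz_on_def by blast
qed

lemma bdd_lipschitz_on_uminus: "bdd_lipschitz_on J B f \<Longrightarrow> bdd_lipschitz_on J B (\<lambda>p. - f p)"
  unfolding bdd_lipschitz_on_def by (metis abs_minus_cancel abs_minus_commute minus_diff_minus)

lemma bdd_lipschitz_on_mult:
  assumes "bdd_lipschitz_on J B f" "bdd_lipschitz_on J B g"
  shows "bdd_lipschitz_on J B (\<lambda>p. f p * g p)"
proof -
  obtain L1 L2 where L1: "\<forall>p\<in>B. \<forall>q\<in>B. \<bar>f p\<bar> \<le> L1 \<and> \<bar>f p - f q\<bar> \<le> L1 * dist_l1 J p q"
    and L2: "\<forall>p\<in>B. \<forall>q\<in>B. \<bar>g p\<bar> \<le> L2 \<and> \<bar>g p - g q\<bar> \<le> L2 * dist_l1 J p q"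
    using assms unfolding bdd_lipschitz_on_def by blast
  have "\<bar>f p * g p\<bar> \<le> 2 * L1 * L2 \<and> \<bar>f p * g p - f q * g q\<bar> \<le> 2 * L1 * L2 * dist_l1 J p q"
    if p: "p \<in> B" and q: "q \<in> B" for p q
  proof
    have f: "\<bar>f p\<bar> \<le> L1" "\<bar>f p - f q\<bar> \<le> L1 * dist_l1 J p q"
      and g: "\<bar>g p\<bar> \<le> L2" "\<bar>g q\<bar> \<le> L2" "\<bar>g p - g q\<bar> \<le> L2 * dist_l1 J p q"
      using L1 L2 p q by blast+
    then have "0 \<le> L1" "0 \<le> L2"
      by linarith+
    then show "\<bar>f p * g p\<bar> \<le> 2 * L1 * L2"
      using f g by (simp add: abs_mult mult_mono')
    have "\<bar>f p * g p - f q * g q\<bar> = \<bar>f p * (g p - g q) + g q * (f p - f q)\<bar>"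
      by (simp add: algebra_simps)
    also have "\<dots> \<le> \<bar>f p\<bar> * \<bar>g p - g q\<bar> + \<bar>g q\<bar> * \<bar>f p - f q\<bar>"
      by (metis abs_mult abs_triangle_ineq)
    also have "\<dots> \<le> L1 * (L2 * dist_l1 J p q) + L2 * (L1 * dist_l1 J p q)"
      using f g \<open>0 \<le> L1\<close> \<open>0 \<le> L2\<close> by (intro add_mono mult_mono) auto
    finally show "\<bar>f p * g p - f q * g q\<bar> \<le> 2 * L1 * L2 * dist_l1 J p q"
      by (simp add: algebra_simps)
  qed
  then show ?thesis
    unfolding bdd_lipschitz_on_def by blast
qed

lemma bdd_lipschitz_on_sum:
  "finite I \<Longrightarrow> (\<And>i. i \<in> I \<Longrightarrow> bdd_lipschitz_on J B (f i)) \<Longrightarrow> bdd_lipschitz_on J B (\<lambda>p. \<Sum>i\<in>I. f i p)"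
  by (induction I rule: finite_induct) (auto intro: bdd_lipschitz_on_const bdd_lipschitz_on_add)

lemma bdd_lipschitz_on_echelon:
  "(\<And>t c. bdd_lipschitz_on J B (\<lambda>p. P p t c)) \<Longrightarrow> bdd_lipschitz_on J B (\<lambda>p. echelon S (P p) t c)"
  unfolding echelon_def by (cases "c \<in> S") (auto intro: bdd_lipschitz_on_const)

lemma bdd_lipschitz_on_echelon_kernel:
  assumes "\<And>t c. bdd_lipschitz_on J B (\<lambda>p. P p t c)" "\<And>t c. bdd_lipschitz_on J B (\<lambda>p. F p t c)"
  shows "bdd_lipschitz_on J B (\<lambda>p. echelon_kernel S k (P p) (F p) m s)"
  unfolding echelon_kernel_def using assms
  by (cases "m \<in> S") (auto intro!: bdd_lipschitz_on_uminus bdd_lipschitz_on_sum bdd_lipschitz_on_mult)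

lemma bdd_lipschitz_on_mat_mult_on:
  assumes "finite S" "\<And>t c. bdd_lipschitz_on J B (\<lambda>p. W p t c)" "\<And>t c. bdd_lipschitz_on J B (\<lambda>p. U p t c)"
  shows "bdd_lipschitz_on J B (\<lambda>p. mat_mult_on S (W p) (U p) r c)"
  unfolding mat_mult_on_def using assms by (auto intro!: bdd_lipschitz_on_sum bdd_lipschitz_on_mult)

lemma bdd_lipschitz_on_param_mat:
  assumes S: "pivot_sets a S"
  shows "bdd_lipschitz_on (param_index n a S) (cube (param_index n a S) (\<lambda>_. 0) R)
    (\<lambda>p. param_mat n a S p i r c)"
proof -
  let ?J = "param_index n a S"
  have "bdd_lipschitz_on ?J (cube ?J (\<lambda>_. 0) R) (\<lambda>p. param_entry n a S p i b t c)" for i b t c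
  proof (cases "(i, b, t, c) \<in> ?J")
    case True
    have "bdd_lipschitz_on ?J (cube ?J (\<lambda>_. 0) R) (\<lambda>p. p (i, b, t, c))"
      by (rule bdd_lipschitz_on_coord[OF finite_param_index[OF S] True]) (use True in \<open>auto simp: mem_cube_iff\<close>)
    then show ?thesis
      unfolding param_entry_def using True by simp
  qed (simp add: param_entry_def bdd_lipschitz_on_const)
  then show ?thesis
    unfolding param_mat_def using pivot_sets_finite[OF S]
    by (intro bdd_lipschitz_on_mat_mult_on bdd_lipschitz_on_echelon_kernel bdd_lipschitz_on_echelon)
qed

lemma lipschitz_param_point:
  fixes e :: "'n::finite \<Rightarrow> nat \<times> nat \<times> nat"
  assumes S: "pivot_sets a S"
  obtains L where "L \<ge> 0" "\<And>p q. p \<in> cube (param_index n a S) (\<lambda>_. 0) R \<Longrightarrow> q \<in> cube (param_index n a S) (\<lambda>_. 0) R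
    \<Longrightarrow> dist (param_point n a e S p) (param_point n a e S q) \<le> L * dist_l1 (param_index n a S) p q"
proof -
  let ?J = "param_index n a S" and ?B = "cube (param_index n a S) (\<lambda>_. 0) R"
  have "\<exists>L. \<forall>p\<in>?B. \<forall>q\<in>?B. \<bar>param_point n a e S p $ k - param_point n a e S q $ k\<bar> \<le> L * dist_l1 ?J p q" for k
    using bdd_lipschitz_on_param_mat[OF S, of n R "fst (e k)" "fst (snd (e k))" "snd (snd (e k))"]
    unfolding bdd_lipschitz_on_def param_point_def by (auto simp: case_prod_beta)
  then obtain L where L: "\<And>k p q. p \<in> ?B \<Longrightarrow> q \<in> ?B
      \<Longrightarrow> \<bar>param_point n a e S p $ k - param_point n a e S q $ k\<bar> \<le> L k * dist_l1 ?J p q"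
    by metis
  have "dist (param_point n a e S p) (param_point n a e S q) \<le> (\<Sum>k\<in>UNIV. \<bar>L k\<bar>) * dist_l1 ?J p q"
    if "p \<in> ?B" "q \<in> ?B" for p q
  proof -
    have "dist (param_point n a e S p) (param_point n a e S q)
        \<le> (\<Sum>k\<in>UNIV. \<bar>(param_point n a e S p - param_point n a e S q) $ k\<bar>)"
      unfolding dist_norm by (rule norm_le_l1_cart)
    also have "\<dots> \<le> (\<Sum>k\<in>UNIV. \<bar>L k\<bar> * dist_l1 ?J p q)"
    proof (intro sum_mono)
      fix k
      have "\<bar>(param_point n a e S p - param_point n a e S q) $ k\<bar> \<le> L k * dist_l1 ?J p q"
        using L[OF that, of k] by simp
      also have "\<dots> \<le> \<bar>L k\<bar> * dist_l1 ?J p q"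
        by (intro mult_right_mono dist_l1_nonneg) simp
      finally show "\<bar>(param_point n a e S p - param_point n a e S q) $ k\<bar> \<le> \<bar>L k\<bar> * dist_l1 ?J p q" .
    qed
    finally show ?thesis
      by (simp add: sum_distrib_right)
  qed
  then show ?thesis
    using that[of "\<Sum>k\<in>UNIV. \<bar>L k\<bar>"] by (simp add: sum_nonneg)
qed

section \<open>Injectivity near a generic complex\<close>

lemma abs_sum_mult_le:
  fixes w :: "nat \<Rightarrow> real"
  assumes "\<And>s. s < r \<Longrightarrow> \<bar>B s\<bar> \<le> b"
  shows "\<bar>\<Sum>s<r. B s * w s\<bar> \<le> b * (\<Sum>s<r. \<bar>w s\<bar>)"
proof -
  have "\<bar>\<Sum>s<r. B s * w s\<bar> \<le> (\<Sum>s<r. \<bar>B s\<bar> * \<bar>w s\<bar>)"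
    using sum_abs[of "\<lambda>s. B s * w s" "{..<r}"] by (simp add: abs_mult)
  also have "\<dots> \<le> (\<Sum>s<r. b * \<bar>w s\<bar>)"
    using assms by (intro sum_mono mult_right_mono) auto
  finally show ?thesis
    by (simp add: sum_distrib_left)
qed

lemma sum_mult_delta:
  fixes w :: "nat \<Rightarrow> real"
  assumes "t < r"
  shows "(\<Sum>s<r. w s * (if t = s then 1 else 0)) = w t"
proof -
  have "(\<Sum>s<r. w s * (if t = s then 1 else 0)) = (\<Sum>s<r. if t = s then w s else 0)"
    by (intro sum.cong) auto
  then show ?thesis
    using assms by simp
qed

lemma perturbed_identity_solution_bound:
  fixes A A' :: "nat \<Rightarrow> nat \<Rightarrow> real" and v v' :: "nat \<Rightarrow> real"
  assumes r\<epsilon>: "real r * \<epsilon> \<le> 1/2"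
    and A: "\<And>t s. t < r \<Longrightarrow> s < r \<Longrightarrow> \<bar>A t s - (if t = s then 1 else 0)\<bar> \<le> \<epsilon>"
    and AA': "\<And>t s. t < r \<Longrightarrow> s < r \<Longrightarrow> \<bar>A t s - A' t s\<bar> \<le> \<Delta>"
    and v': "\<And>s. s < r \<Longrightarrow> \<bar>v' s\<bar> \<le> 1"
    and Av: "\<And>t. t < r \<Longrightarrow> \<bar>(\<Sum>s<r. A t s * v s) - (\<Sum>s<r. A' t s * v' s)\<bar> \<le> \<Delta>"
    and s: "s < r"
  shows "\<bar>v s - v' s\<bar> \<le> 2 * real r * (1 + real r) * \<Delta>"
proof -
  define u where "u s = v s - v' s" for s
  define U where "U = (\<Sum>s<r. \<bar>u s\<bar>)"
  have \<Delta>: "0 \<le> \<Delta>"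
    using AA'[OF s s] by linarith
  have "\<bar>u t\<bar> \<le> (1 + real r) * \<Delta> + \<epsilon> * U" if t: "t < r" for t
  proof -
    have "u t = ((\<Sum>s<r. A t s * v s) - (\<Sum>s<r. A' t s * v' s)) - (\<Sum>s<r. (A t s - A' t s) * v' s)
        - (\<Sum>s<r. (A t s - (if t = s then 1 else 0)) * u s)"
      using sum_mult_delta[OF t] by (simp add: u_def algebra_simps sum_subtractf sum.distrib)
    moreover have "\<bar>\<Sum>s<r. (A t s - A' t s) * v' s\<bar> \<le> \<Delta> * real r"
    proof -
      have "\<bar>\<Sum>s<r. (A t s - A' t s) * v' s\<bar> \<le> \<Delta> * (\<Sum>s<r. \<bar>v' s\<bar>)"
        using AA' t by (intro abs_sum_mult_le) auto
      also have "\<dots> \<le> \<Delta> * real r"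
        using v' \<Delta> sum_bounded_above[of "{..<r}" "\<lambda>s. \<bar>v' s\<bar>" 1] by (intro mult_left_mono) auto
      finally show ?thesis .
    qed
    moreover have "\<bar>\<Sum>s<r. (A t s - (if t = s then 1 else 0)) * u s\<bar> \<le> \<epsilon> * U"
      unfolding U_def using A t by (intro abs_sum_mult_le) auto
    ultimately show ?thesis
      using Av[OF t] by (simp add: algebra_simps)
  qed
  then have "U \<le> (\<Sum>t<r. (1 + real r) * \<Delta> + \<epsilon> * U)"
    unfolding U_def by (intro sum_mono) (simp add: U_def)
  also have "\<dots> = real r * (1 + real r) * \<Delta> + (real r * \<epsilon>) * U"
    by (simp add: algebra_simps)
  also have "\<dots> \<le> real r * (1 + real r) * \<Delta> + U / 2"
    using r\<epsilon> mult_right_mono[OF r\<epsilon>, of U] by (simp add: U_def sum_nonneg)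
  finally have "U \<le> 2 * real r * (1 + real r) * \<Delta>"
    by simp
  moreover have "\<bar>u s\<bar> \<le> U"
    unfolding U_def using s by (intro member_le_sum) auto
  ultimately show ?thesis
    unfolding u_def by linarith
qed

lemma abs_param_mat_diff_le_dist:
  assumes e: "bij_betw e UNIV (cc_idx n a)" and idx: "(i, m, c) \<in> cc_idx n a"
  shows "\<bar>param_mat n a S p i m c - param_mat n a S q i m c\<bar>
    \<le> dist (param_point n a e S p) (param_point n a e S q)"
proof -
  have "e (inv e (i, m, c)) = (i, m, c)"
    using bij_betw_inv_into_right[OF e idx] .
  then have "(param_point n a e S p - param_point n a e S q) $ inv e (i, m, c)
      = param_mat n a S p i m c - param_mat n a S q i m c"
    unfolding param_point_def by simp
  then show ?thesis
    unfolding dist_norm by (metis component_le_norm_cart)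
qed

definition rank_profiles :: "nat \<Rightarrow> (nat \<Rightarrow> nat) \<Rightarrow> (nat \<Rightarrow> nat) set" where
  "rank_profiles n a = {r. r 0 = 0 \<and> (\<forall>i>n. r i = 0) \<and> (\<forall>i. r i + r (Suc i) \<le> a i)}"

lemma rank_profiles_le: "r \<in> rank_profiles n a \<Longrightarrow> r i \<le> a i"
  unfolding rank_profiles_def by (metis (mono_tags, lifting) add_leD1 mem_Collect_eq)

lemma pivot_sets_lessThan: "r \<in> rank_profiles n a \<Longrightarrow> pivot_sets a (\<lambda>i. {..<r i})"
  using rank_profiles_le unfolding rank_profiles_def pivot_sets_def by auto

context
  fixes n :: nat and a r :: "nat \<Rightarrow> nat"
  assumes r: "r \<in> rank_profiles n a"
begin

lemma rank_profile_add_le: "r i + r (Suc i) \<le> a i"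
  using r unfolding rank_profiles_def by simp

lemma param_mat_lessThan_pivot:
  assumes i: "1 \<le> i" "i \<le> n" and m: "r (i - 1) \<le> m" "m < a (i - 1)" and s: "s < r i"
  shows "param_mat n a (\<lambda>i. {..<r i}) p i m s = p (i, False, m, s)"
proof -
  let ?S = "\<lambda>i. {..<r i}"
  have "param_mat n a ?S p i m s = (\<Sum>t<r i. param_entry n a ?S p i False m t * echelon {..<r i} (param_entry n a ?S p i True) t s)"
    unfolding param_mat_def mat_mult_on_def echelon_kernel_def using m by simp
  also have "\<dots> = param_entry n a ?S p i False m s"
    using sum_mult_echelon_pivot[of "{..<r i}" s] s by simp
  finally show ?thesis
    using i m s by (simp add: param_entry_def mem_param_index)
qed

lemma param_mat_lessThan_free:
  assumes i: "1 \<le> i" "i \<le> n" and m: "r (i - 1) \<le> m" "m < a (i - 1)" and c: "r i \<le> c" "c < a i"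
  shows "param_mat n a (\<lambda>i. {..<r i}) p i m c = (\<Sum>s<r i. p (i, False, m, s) * p (i, True, s, c))"
  unfolding param_mat_def mat_mult_on_def echelon_kernel_def echelon_def using i m c
  by (intro sum.cong) (auto simp: param_entry_def mem_param_index)

(* Every W_i has an identity block in the rows r (i - 1), ..., r (i - 1) + r i - 1 and every
   echelon coefficient vanishes.  Nearby, the pivot blocks are perturbed identities, which is
   what perturbed_identity_solution_bound needs. *)
definition generic_centre :: "nat \<times> bool \<times> nat \<times> nat \<Rightarrow> real" where
  "generic_centre = (\<lambda>(i, b, m, s). if \<not> b \<and> m = r (i - 1) + s then 1 else 0)"

definition generic_radius :: real where
  "generic_radius = 1 / (2 * (real (\<Sum>i\<le>n. r i) + 1))"

lemma generic_radius_bounds: "0 < generic_radius" "generic_radius \<le> 1" "i \<le> n \<Longrightarrow> real (r i) * generic_radius \<le> 1/2"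
proof -
  have "0 \<le> real (\<Sum>i\<le>n. r i)"
    by (rule of_nat_0_le_iff)
  then show "0 < generic_radius" "generic_radius \<le> 1"
    unfolding generic_radius_def by (simp_all del: of_nat_sum add: field_simps)
  assume "i \<le> n"
  then have "r i \<le> (\<Sum>i\<le>n. r i)"
    by (simp add: member_le_sum)
  then have "real (r i) \<le> real (\<Sum>i\<le>n. r i)"
    by (rule of_nat_mono)
  then show "real (r i) * generic_radius \<le> 1/2"
    unfolding generic_radius_def by (simp del: of_nat_sum add: field_simps)
qed

definition generic_const :: real where
  "generic_const = 2 * real (\<Sum>i\<le>n. r i) * (1 + real (\<Sum>i\<le>n. r i)) + 1"

lemma generic_const_bounds: "1 \<le> generic_const" "i \<le> n \<Longrightarrow> 2 * real (r i) * (1 + real (r i)) \<le> generic_const"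
proof -
  show "1 \<le> generic_const"
    unfolding generic_const_def by (simp del: of_nat_sum)
  assume "i \<le> n"
  then have "real (r i) \<le> real (\<Sum>i\<le>n. r i)"
    by (intro of_nat_mono member_le_sum) auto
  then have "2 * real (r i) * (1 + real (r i)) \<le> 2 * real (\<Sum>i\<le>n. r i) * (1 + real (\<Sum>i\<le>n. r i))"
    by (intro mult_mono) auto
  then show "2 * real (r i) * (1 + real (r i)) \<le> generic_const"
    unfolding generic_const_def by (simp del: of_nat_sum)
qed

lemma generic_pivot_bound:
  fixes e :: "'n::finite \<Rightarrow> nat \<times> nat \<times> nat"
  assumes e: "bij_betw e UNIV (cc_idx n a)"
    and i: "1 \<le> i" "i \<le> n" and m: "r (i - 1) \<le> m" "m < a (i - 1)" and s: "s < r i"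
  shows "\<bar>p (i, False, m, s) - q (i, False, m, s)\<bar>
    \<le> dist (param_point n a e (\<lambda>i. {..<r i}) p) (param_point n a e (\<lambda>i. {..<r i}) q)"
  using abs_param_mat_diff_le_dist[OF e, of i m s "\<lambda>i. {..<r i}" p q] i m s rank_profiles_le[OF r, of i]
  by (simp add: param_mat_lessThan_pivot[OF i m s] cc_idx_iff)

lemma generic_coeff_bound:
  fixes e :: "'n::finite \<Rightarrow> nat \<times> nat \<times> nat"
  defines "J \<equiv> param_index n a (\<lambda>i. {..<r i})"
  assumes e: "bij_betw e UNIV (cc_idx n a)"
    and p: "p \<in> cube J generic_centre generic_radius" and q: "q \<in> cube J generic_centre generic_radius"
    and i: "1 \<le> i" "i \<le> n" and s: "s < r i" and c: "r i \<le> c" "c < a i"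
  shows "\<bar>p (i, True, s, c) - q (i, True, s, c)\<bar> \<le> 2 * real (r i) * (1 + real (r i))
    * dist (param_point n a e (\<lambda>i. {..<r i}) p) (param_point n a e (\<lambda>i. {..<r i}) q)"
proof (rule perturbed_identity_solution_bound[where \<epsilon>=generic_radius and r="r i"
      and A="\<lambda>t s. p (i, False, r (i - 1) + t, s)" and A'="\<lambda>t s. q (i, False, r (i - 1) + t, s)"
      and v="\<lambda>s. p (i, True, s, c)" and v'="\<lambda>s. q (i, True, s, c)"])
  have rows: "r (i - 1) + t < a (i - 1)" if "t < r i" for t
    using rank_profile_add_le[of "i - 1"] i that by simp
  show "real (r i) * generic_radius \<le> 1/2"
    using generic_radius_bounds(3) i by simp
  show "\<bar>p (i, False, r (i - 1) + t, s') - (if t = s' then 1 else 0)\<bar> \<le> generic_radius"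
    if "t < r i" "s' < r i" for t s'
    using mem_cube_bound[OF p, of "(i, False, r (i - 1) + t, s')"] rows[OF that(1)] that i
    unfolding J_def by (simp add: generic_centre_def mem_param_index)
  show "\<bar>p (i, False, r (i - 1) + t, s') - q (i, False, r (i - 1) + t, s')\<bar>
      \<le> dist (param_point n a e (\<lambda>i. {..<r i}) p) (param_point n a e (\<lambda>i. {..<r i}) q)"
    if "t < r i" "s' < r i" for t s'
    using generic_pivot_bound[OF e i _ rows[OF that(1)] that(2)] by simp
  show "\<bar>q (i, True, s', c)\<bar> \<le> 1" if "s' < r i" for s'
    using mem_cube_bound[OF q, of "(i, True, s', c)"] that i c generic_radius_bounds(2)
    unfolding J_def by (simp add: generic_centre_def mem_param_index)
  show "\<bar>(\<Sum>s'<r i. p (i, False, r (i - 1) + t, s') * p (i, True, s', c))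
      - (\<Sum>s'<r i. q (i, False, r (i - 1) + t, s') * q (i, True, s', c))\<bar>
      \<le> dist (param_point n a e (\<lambda>i. {..<r i}) p) (param_point n a e (\<lambda>i. {..<r i}) q)" if "t < r i" for t
    using abs_param_mat_diff_le_dist[OF e, of i "r (i - 1) + t" c "\<lambda>i. {..<r i}" p q] i rows[OF that] c
    by (simp add: param_mat_lessThan_free cc_idx_iff)
qed (rule s)

lemma generic_cube_entry_bound:
  fixes e :: "'n::finite \<Rightarrow> nat \<times> nat \<times> nat"
  defines "J \<equiv> param_index n a (\<lambda>i. {..<r i})"
  assumes e: "bij_betw e UNIV (cc_idx n a)"
    and p: "p \<in> cube J generic_centre generic_radius" and q: "q \<in> cube J generic_centre generic_radius"
    and j: "j \<in> J"
  shows "\<bar>p j - q j\<bar> \<le> generic_const *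
    dist (param_point n a e (\<lambda>i. {..<r i}) p) (param_point n a e (\<lambda>i. {..<r i}) q)"
proof -
  define \<Delta> where "\<Delta> = dist (param_point n a e (\<lambda>i. {..<r i}) p) (param_point n a e (\<lambda>i. {..<r i}) q)"
  have \<Delta>: "0 \<le> \<Delta>"
    unfolding \<Delta>_def by simp
  obtain i b m c where jj: "j = (i, b, m, c)"
    by (metis prod_cases4)
  show ?thesis
  proof (cases b)
    case True
    then have "1 \<le> i" "i \<le> n" "m < r i" "r i \<le> c" "c < a i"
      using j unfolding jj J_def by (auto simp: mem_param_index)
    then have "\<bar>p j - q j\<bar> \<le> 2 * real (r i) * (1 + real (r i)) * \<Delta>"
      using generic_coeff_bound[OF e p[unfolded J_def] q[unfolded J_def]] True unfolding jj \<Delta>_def by simp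
    also have "\<dots> \<le> generic_const * \<Delta>"
      using generic_const_bounds(2)[OF \<open>i \<le> n\<close>] \<Delta> by (rule mult_right_mono)
    finally show ?thesis
      unfolding \<Delta>_def .
  next
    case False
    then have "1 \<le> i" "i \<le> n" "r (i - 1) \<le> m" "m < a (i - 1)" "c < r i"
      using j unfolding jj J_def by (auto simp: mem_param_index)
    then have "\<bar>p j - q j\<bar> \<le> 1 * \<Delta>"
      using generic_pivot_bound[OF e] False unfolding jj \<Delta>_def by simp
    also have "\<dots> \<le> generic_const * \<Delta>"
      using generic_const_bounds(1) \<Delta> by (rule mult_right_mono)
    finally show ?thesis
      unfolding \<Delta>_def .
  qed
qed

end

section \<open>The dimension of the variety of chain complexes\<close>

lemma haus_outer_cc_variety_neq_0:
  fixes e :: "'n::finite \<Rightarrow> nat \<times> nat \<times> nat"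
  assumes r: "r \<in> rank_profiles n a" and e: "bij_betw e UNIV (cc_idx n a)"
    and s: "0 \<le> s" "s \<le> real (param_dim n a r)"
  shows "haus_outer s (cc_variety n a e) \<noteq> 0"
proof -
  let ?S = "\<lambda>i. {..<r i}"
  let ?J = "param_index n a ?S"
  let ?K = "real (card ?J) * generic_const n r + 1"
  have S: "pivot_sets a ?S"
    using r by (rule pivot_sets_lessThan)
  have "dist_l1 ?J p q \<le> ?K * dist (param_point n a e ?S p) (param_point n a e ?S q)"
    if "p \<in> cube ?J (generic_centre r) (generic_radius n r)" "q \<in> cube ?J (generic_centre r) (generic_radius n r)" for p q
  proof -
    have "dist_l1 ?J p q \<le> real (card ?J) * (generic_const n r * dist (param_point n a e ?S p) (param_point n a e ?S q))"
      using generic_cube_entry_bound[OF r e that] by (intro dist_l1_le) simp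
    then show ?thesis
      by (simp add: algebra_simps add_increasing)
  qed
  moreover have "card ?J = param_dim n a r"
    using card_param_index[OF S] by simp
  moreover have "0 < ?K"
    using generic_const_bounds(1)[OF r] by (simp add: add_nonneg_pos)
  ultimately have "haus_outer s (param_point n a e ?S ` cube ?J (generic_centre r) (generic_radius n r)) \<noteq> 0"
    using finite_param_index[OF S] generic_radius_bounds(1)[OF r] s
    by (intro haus_outer_colipschitz_image_cube_neq_0) auto
  moreover have "param_point n a e ?S ` cube ?J (generic_centre r) (generic_radius n r) \<subseteq> cc_variety n a e"
    using param_point_in_cc_variety[OF e S] by blast
  ultimately show ?thesis
    using haus_outer_mono by (metis le_zero_eq)
qed

lemma haus_outer_param_cube_eq_0:
  fixes e :: "'n::finite \<Rightarrow> nat \<times> nat \<times> nat"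
  assumes S: "pivot_sets a S" and R: "R > 0" and s: "s > real (param_dim n a (\<lambda>i. card (S i)))"
  shows "haus_outer s (param_point n a e S ` cube (param_index n a S) (\<lambda>_. 0) R) = 0"
proof -
  obtain L where "L \<ge> 0" "\<And>p q. p \<in> cube (param_index n a S) (\<lambda>_. 0) R \<Longrightarrow> q \<in> cube (param_index n a S) (\<lambda>_. 0) R
    \<Longrightarrow> dist (param_point n a e S p) (param_point n a e S q) \<le> L * dist_l1 (param_index n a S) p q"
    using lipschitz_param_point[OF S] by metis
  then show ?thesis
    using finite_param_index[OF S] R s card_param_index[OF S]
    by (intro haus_outer_lipschitz_image_cube_eq_0) auto
qed

lemma param_point_restrict: "param_point n a e S (restrict p (param_index n a S)) = param_point n a e S p"
proof -
  have "param_entry n a S (restrict p (param_index n a S)) = param_entry n a S p"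
    by (auto simp: param_entry_def fun_eq_iff)
  then show ?thesis
    unfolding param_point_def param_mat_def by simp
qed

lemma restrict_mem_cube: "finite J \<Longrightarrow> \<exists>R::nat. restrict p J \<in> cube J (\<lambda>_. 0) (Suc R)"
proof -
  assume J: "finite J"
  have "\<bar>p j\<bar> \<le> real (Suc (nat \<lceil>\<Sum>j\<in>J. \<bar>p j\<bar>\<rceil>))" if "j \<in> J" for j
  proof -
    have "\<bar>p j\<bar> \<le> (\<Sum>j\<in>J. \<bar>p j\<bar>)"
      using J that by (intro member_le_sum) auto
    then show ?thesis
      by linarith
  qed
  then show ?thesis
    by (intro exI[of _ "nat \<lceil>\<Sum>j\<in>J. \<bar>p j\<bar>\<rceil>"]) (simp add: mem_cube_iff)
qed

lemma finite_pivot_sets_upto: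
  "finite {S. pivot_sets a S \<and> (\<forall>i>n. S i = {})}"
proof (rule finite_subset)
  show "{S. pivot_sets a S \<and> (\<forall>i>n. S i = {})}
      \<subseteq> {S. \<forall>i. (i \<in> {..n} \<longrightarrow> S i \<in> Pow (\<Union>i\<le>n. {..<a i})) \<and> (i \<notin> {..n} \<longrightarrow> S i = {})}"
    unfolding pivot_sets_def by auto
qed (intro finite_set_of_finite_funs; simp)

lemma cc_variety_point_in_param_cube:
  fixes e :: "'n::finite \<Rightarrow> nat \<times> nat \<times> nat"
  assumes e: "bij_betw e UNIV (cc_idx n a)" and x: "x \<in> cc_variety n a e"
  obtains S R where "pivot_sets a S" "\<forall>i>n. S i = {}" "\<And>i. card (S i) = cc_rank n a e x i"
    "x \<in> param_point n a e S ` cube (param_index n a S) (\<lambda>_. 0) (Suc R)"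
proof -
  obtain S p where S: "pivot_sets a S" "\<And>i. card (S i) = cc_rank n a e x i" and xp: "x = param_point n a e S p"
    using cc_variety_eq_param_point[OF e x] by metis
  have "S i = {}" if "i > n" for i
    using S(2)[of i] pivot_sets_finite[OF S(1), of i] that by (simp add: cc_rank_def)
  moreover from restrict_mem_cube[OF finite_param_index[OF S(1)]]
  obtain R :: nat where "restrict p (param_index n a S) \<in> cube (param_index n a S) (\<lambda>_. 0) (Suc R)" ..
  then have "x \<in> param_point n a e S ` cube (param_index n a S) (\<lambda>_. 0) (Suc R)"
    unfolding xp by (metis image_eqI param_point_restrict)
  ultimately show ?thesis
    using that S by blast
qed

lemma haus_outer_low_param_dim_eq_0:
  fixes e :: "'n::finite \<Rightarrow> nat \<times> nat \<times> nat"
  assumes e: "bij_betw e UNIV (cc_idx n a)" and Y: "Y \<subseteq> cc_variety n a e"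
    and low: "\<And>x. x \<in> Y \<Longrightarrow> real (param_dim n a (cc_rank n a e x)) < s"
  shows "haus_outer s Y = 0"
proof -
  define \<T> where "\<T> = {S. pivot_sets a S \<and> (\<forall>i>n. S i = {}) \<and> real (param_dim n a (\<lambda>i. card (S i))) < s}"
  have "Y \<subseteq> (\<Union>R. \<Union>S\<in>\<T>. param_point n a e S ` cube (param_index n a S) (\<lambda>_. 0) (Suc R))"
  proof
    fix x
    assume x: "x \<in> Y"
    then obtain S R where S: "pivot_sets a S" "\<forall>i>n. S i = {}" "\<And>i. card (S i) = cc_rank n a e x i"
      and xS: "x \<in> param_point n a e S ` cube (param_index n a S) (\<lambda>_. 0) (Suc R)"
      using cc_variety_point_in_param_cube[OF e] Y by (metis subsetD)
    have "(\<lambda>i. card (S i)) = cc_rank n a e x"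
      using S(3) by (rule ext)
    then have "S \<in> \<T>"
      using S(1,2) low[OF x] unfolding \<T>_def by simp
    then show "x \<in> (\<Union>R. \<Union>S\<in>\<T>. param_point n a e S ` cube (param_index n a S) (\<lambda>_. 0) (Suc R))"
      using xS by blast
  qed
  moreover have "haus_outer s (\<Union>R. \<Union>S\<in>\<T>. param_point n a e S ` cube (param_index n a S) (\<lambda>_. 0) (Suc R)) = 0"
  proof (intro haus_outer_null_UN haus_outer_null_finite_UN)
    show "finite \<T>"
      by (rule finite_subset[OF _ finite_pivot_sets_upto]) (auto simp: \<T>_def)
    show "haus_outer s (param_point n a e S ` cube (param_index n a S) (\<lambda>_. 0) (Suc R)) = 0" if "S \<in> \<T>" for S R
      using that unfolding \<T>_def by (intro haus_outer_param_cube_eq_0) auto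
  qed
  ultimately show ?thesis
    by (rule haus_outer_null_subset[rotated])
qed

lemma cc_rank_in_rank_profiles:
  assumes "x \<in> cc_variety n a e"
  shows "cc_rank n a e x \<in> rank_profiles n a"
proof -
  have "cc_rank n a e x 0 = 0" "\<forall>i>n. cc_rank n a e x i = 0"
    by (simp_all add: cc_rank_def)
  then show ?thesis
    unfolding rank_profiles_def using cc_rank_add_le[OF assms] by simp
qed

lemma finite_rank_profiles: "finite (rank_profiles n a)"
proof (rule finite_subset)
  show "rank_profiles n a \<subseteq> {r. \<forall>i. (i \<in> {..n} \<longrightarrow> r i \<in> {..Max (a ` {..n})}) \<and> (i \<notin> {..n} \<longrightarrow> r i = 0)}"
  proof (intro subsetI CollectI allI conjI impI)
    fix r i
    assume r: "r \<in> rank_profiles n a"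
    show "r i \<in> {..Max (a ` {..n})}" if "i \<in> {..n}"
      using le_trans[OF rank_profiles_le[OF r, of i] Max_ge[of "a ` {..n}" "a i"]] that by simp
    show "r i = 0" if "i \<notin> {..n}"
      using r that unfolding rank_profiles_def by simp
  qed
qed (intro finite_set_of_finite_funs; simp)

definition max_param_dim :: "nat \<Rightarrow> (nat \<Rightarrow> nat) \<Rightarrow> nat" where
  "max_param_dim n a = Max (param_dim n a ` rank_profiles n a)"

lemma param_dim_le_max_param_dim: "r \<in> rank_profiles n a \<Longrightarrow> param_dim n a r \<le> max_param_dim n a"
  unfolding max_param_dim_def using finite_rank_profiles by simp

lemma max_param_dim_attained: "\<exists>r \<in> rank_profiles n a. param_dim n a r = max_param_dim n a"
proof -
  have "(\<lambda>_. 0) \<in> rank_profiles n a"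
    unfolding rank_profiles_def by simp
  then show ?thesis
    unfolding max_param_dim_def using finite_rank_profiles
    by (metis (mono_tags, lifting) Max_in empty_iff finite_imageI image_iff)
qed

theorem hausdorff_dim_cc_variety:
  fixes e :: "'n::finite \<Rightarrow> nat \<times> nat \<times> nat"
  assumes e: "bij_betw e UNIV (cc_idx n a)"
  shows "hausdorff_dim (cc_variety n a e) = max_param_dim n a"
proof -
  have "{s. 0 \<le> s \<and> haus_outer s (cc_variety n a e) = 0} = {real (max_param_dim n a)<..}"
  proof (intro antisym subsetI)
    fix s
    assume "s \<in> {s. 0 \<le> s \<and> haus_outer s (cc_variety n a e) = 0}"
    then show "s \<in> {real (max_param_dim n a)<..}"
      using max_param_dim_attained haus_outer_cc_variety_neq_0[OF _ e] by force
  next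
    fix s
    assume s: "s \<in> {real (max_param_dim n a)<..}"
    have "real (param_dim n a (cc_rank n a e x)) < s" if "x \<in> cc_variety n a e" for x
    proof -
      have "param_dim n a (cc_rank n a e x) \<le> max_param_dim n a"
        using param_dim_le_max_param_dim[OF cc_rank_in_rank_profiles[OF that]] .
      then show ?thesis
        using s by (simp add: le_less_trans)
    qed
    then have "haus_outer s (cc_variety n a e) = 0"
      by (intro haus_outer_low_param_dim_eq_0[OF e]) auto
    then show "s \<in> {s. 0 \<le> s \<and> haus_outer s (cc_variety n a e) = 0}"
      using s by simp
  qed
  then show ?thesis
    unfolding hausdorff_dim_def by simp
qed

theorem haus_outer_non_max_param_dim_eq_0:
  fixes e :: "'n::finite \<Rightarrow> nat \<times> nat \<times> nat"
  assumes e: "bij_betw e UNIV (cc_idx n a)"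
  shows "haus_outer (hausdorff_dim (cc_variety n a e))
    {x \<in> cc_variety n a e. param_dim n a (cc_rank n a e x) < max_param_dim n a} = 0"
  using e by (intro haus_outer_low_param_dim_eq_0) (auto simp: hausdorff_dim_cc_variety)

section \<open>Complexes of length three\<close>

lemma rank_profiles_3_iff:
  "r \<in> rank_profiles 3 a \<longleftrightarrow> r 0 = 0 \<and> (\<forall>i>3. r i = 0) \<and>
     r 1 \<le> a 0 \<and> r 1 + r 2 \<le> a 1 \<and> r 2 + r 3 \<le> a 2 \<and> r 3 \<le> a 3"
proof
  assume "r \<in> rank_profiles 3 a"
  then show "r 0 = 0 \<and> (\<forall>i>3. r i = 0) \<and> r 1 \<le> a 0 \<and> r 1 + r 2 \<le> a 1 \<and> r 2 + r 3 \<le> a 2 \<and> r 3 \<le> a 3"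
    unfolding rank_profiles_def
    by (metis (mono_tags, lifting) One_nat_def add_0 add_leD1 mem_Collect_eq numeral_2_eq_2 numeral_3_eq_3)
next
  assume r: "r 0 = 0 \<and> (\<forall>i>3. r i = 0) \<and> r 1 \<le> a 0 \<and> r 1 + r 2 \<le> a 1 \<and> r 2 + r 3 \<le> a 2 \<and> r 3 \<le> a 3"
  have "r i + r (Suc i) \<le> a i" for i
  proof -
    consider "i = 0" | "i = 1" | "i = 2" | "i = 3" | "i > 3"
      by linarith
    then show ?thesis
      by cases (use r in \<open>simp_all add: numeral_eq_Suc\<close>)
  qed
  then show "r \<in> rank_profiles 3 a"
    using r unfolding rank_profiles_def by simp
qed

lemma param_dim_3_eq:
  assumes "r \<in> rank_profiles 3 a"
  shows "int (param_dim 3 a r) = int (a 0) * r 1 + r 1 * (int (a 1) - r 1) + (int (a 1) - r 1) * r 2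
    + r 2 * (int (a 2) - r 2) + (int (a 2) - r 2) * r 3 + r 3 * (int (a 3) - r 3)"
proof -
  have "{1..3::nat} = {1, 2, 3}"
    by auto
  moreover have "r 0 = 0"
    using assms unfolding rank_profiles_def by simp
  ultimately show ?thesis
    using rank_profiles_le[OF assms] by (simp add: param_dim_def of_nat_diff numeral_eq_Suc)
qed

lemma rank_profile_3_not_max:
  assumes a01: "a 0 \<le> a 1" and r: "r \<in> rank_profiles 3 a"
    and lt: "r 1 + r 2 + r 3 < a 0 + a 2" "r 1 + r 2 + r 3 < a 1 + a 3"
  shows "param_dim 3 a r < max_param_dim 3 a"
proof -
  have f: "r 0 = 0" "\<forall>i>3. r i = 0" "r 1 \<le> a 0" "r 1 + r 2 \<le> a 1" "r 2 + r 3 \<le> a 2" "r 3 \<le> a 3"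
    using r by (simp_all add: rank_profiles_3_iff)
  have better: "param_dim 3 a r < max_param_dim 3 a"
    if r': "r' \<in> rank_profiles 3 a" and gt: "int (param_dim 3 a r) < int (param_dim 3 a r')" for r'
    using param_dim_le_max_param_dim[OF r'] gt by linarith
  consider "r 1 < a 0" "r 1 + r 2 < a 1" | "r 1 + r 2 < a 1" "r 2 + r 3 < a 2" | "r 2 + r 3 < a 2" "r 3 < a 3"
    | "r 1 < a 0" "r 3 < a 3" "r 1 + r 2 = a 1" "r 2 + r 3 = a 2"
    using f lt by linarith
  then show ?thesis
  proof cases
    case 1
    let ?r' = "r(1 := r 1 + 1)"
    have r': "?r' \<in> rank_profiles 3 a"
      using f 1 by (simp add: rank_profiles_3_iff)
    show ?thesis
      using param_dim_3_eq[OF r'] param_dim_3_eq[OF r] 1 by (intro better[OF r']) (simp add: algebra_simps)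
  next
    case 2
    let ?r' = "r(2 := r 2 + 1)"
    have r': "?r' \<in> rank_profiles 3 a"
      using f 2 by (simp add: rank_profiles_3_iff)
    show ?thesis
      using param_dim_3_eq[OF r'] param_dim_3_eq[OF r] 2 by (intro better[OF r']) (simp add: algebra_simps)
  next
    case 3
    let ?r' = "r(3 := r 3 + 1)"
    have r': "?r' \<in> rank_profiles 3 a"
      using f 3 by (simp add: rank_profiles_3_iff)
    show ?thesis
      using param_dim_3_eq[OF r'] param_dim_3_eq[OF r] 3 by (intro better[OF r']) (simp add: algebra_simps)
  next
    case 4
    \<comment> \<open>here \<open>a 0 \<le> a 1\<close> forces \<open>r 2 > 0\<close>, so a rank can be moved from \<open>d\<^sub>2\<close> to \<open>d\<^sub>1\<close> and \<open>d\<^sub>3\<close>\<close>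
    have r2: "r 2 \<ge> 1"
      using 4 a01 by linarith
    let ?r' = "r(1 := r 1 + 1, 2 := r 2 - 1, 3 := r 3 + 1)"
    have r': "?r' \<in> rank_profiles 3 a"
      using f 4 r2 by (simp add: rank_profiles_3_iff)
    show ?thesis
      using param_dim_3_eq[OF r'] param_dim_3_eq[OF r] 4 r2
      by (intro better[OF r']) (simp add: algebra_simps of_nat_diff)
  qed
qed

lemma sum_betti_3:
  "(\<Sum>i\<le>3. betti 3 a e x i) = int (a 0) + int (a 1) + int (a 2) + int (a 3)
     - 2 * (int (cc_rank 3 a e x 1) + int (cc_rank 3 a e x 2) + int (cc_rank 3 a e x 3))"
proof -
  have "cc_rank 3 a e x 0 = 0" "cc_rank 3 a e x 4 = 0"
    by (simp_all add: cc_rank_def)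
  then show ?thesis
    by (simp add: betti_def numeral_eq_Suc atMost_Suc)
qed

lemma rank_sum_lt_if_sum_betti_neq_3:
  assumes r: "cc_rank 3 a e x \<in> rank_profiles 3 a"
    and ne: "(\<Sum>i\<le>3. betti 3 a e x i) \<noteq> \<bar>int (a 0) - int (a 1) + int (a 2) - int (a 3)\<bar>"
  shows "cc_rank 3 a e x 1 + cc_rank 3 a e x 2 + cc_rank 3 a e x 3 < a 0 + a 2"
    and "cc_rank 3 a e x 1 + cc_rank 3 a e x 2 + cc_rank 3 a e x 3 < a 1 + a 3"
proof -
  let ?R = "cc_rank 3 a e x 1 + cc_rank 3 a e x 2 + cc_rank 3 a e x 3"
  have R: "?R \<le> a 0 + a 2" "?R \<le> a 1 + a 3"
    using r unfolding rank_profiles_3_iff by linarith+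
  have R_int: "int ?R = int (cc_rank 3 a e x 1) + int (cc_rank 3 a e x 2) + int (cc_rank 3 a e x 3)"
    by simp
  have "?R \<noteq> a 0 + a 2"
  proof
    assume "?R = a 0 + a 2"
    then have "int ?R = int (a 0) + int (a 2)" "int ?R \<le> int (a 1) + int (a 3)"
      using R by simp_all
    then show False
      using ne R_int unfolding sum_betti_3 by (simp add: abs_if split: if_splits)
  qed
  moreover have "?R \<noteq> a 1 + a 3"
  proof
    assume "?R = a 1 + a 3"
    then have "int ?R = int (a 1) + int (a 3)" "int ?R \<le> int (a 0) + int (a 2)"
      using R by simp_all
    then show False
      using ne R_int unfolding sum_betti_3 by (simp add: abs_if split: if_splits)
  qed
  ultimately show "?R < a 0 + a 2" "?R < a 1 + a 3"
    using R by linarith+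
qed

theorem theorem3p3:
  fixes a :: "nat \<Rightarrow> nat"
    and e :: "'n::finite \<Rightarrow> nat \<times> nat \<times> nat"
    and f :: "real^'n \<Rightarrow> real"
  assumes "a 1 \<ge> a 0" and "a 0 + a 2 \<ge> a 1" and "a 1 + a 3 \<ge> a 2" and "a 2 \<ge> a 3"
    and "bij_betw e UNIV (cc_idx 3 a)"
    and "f \<in> borel_measurable borel" and "\<forall>x. 0 \<le> f x" and "bounded (range f)"
    and "(\<integral>\<^sup>+ x. ennreal (f x) \<partial>lborel) = 1"
    and "(\<integral>\<^sup>+ x \<in> cc_variety 3 a e. ennreal (f x)
           \<partial>hausdorff_measure (hausdorff_dim (cc_variety 3 a e))) > 0"
  shows "{x \<in> cc_variety 3 a e.
            (\<Sum>i\<le>3. betti 3 a e x i) \<noteq> \<bar>int (a 0) - int (a 1) + int (a 2) - int (a 3)\<bar>}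
           \<in> sets (hausdorff_measure (hausdorff_dim (cc_variety 3 a e)))
       \<and> (\<integral>\<^sup>+ x \<in> {x \<in> cc_variety 3 a e.
            (\<Sum>i\<le>3. betti 3 a e x i) \<noteq> \<bar>int (a 0) - int (a 1) + int (a 2) - int (a 3)\<bar>}.
            ennreal (f x) \<partial>hausdorff_measure (hausdorff_dim (cc_variety 3 a e))) = 0"
proof -
  let ?V = "cc_variety 3 a e"
  let ?Bad = "{x \<in> ?V. (\<Sum>i\<le>3. betti 3 a e x i) \<noteq> \<bar>int (a 0) - int (a 1) + int (a 2) - int (a 3)\<bar>}"
  have "?Bad \<subseteq> {x \<in> ?V. param_dim 3 a (cc_rank 3 a e x) < max_param_dim 3 a}"
  proof safe
    fix x
    assume x: "x \<in> ?V" and ne: "(\<Sum>i\<le>3. betti 3 a e x i) \<noteq> \<bar>int (a 0) - int (a 1) + int (a 2) - int (a 3)\<bar>"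
    have r: "cc_rank 3 a e x \<in> rank_profiles 3 a"
      using x by (rule cc_rank_in_rank_profiles)
    show "param_dim 3 a (cc_rank 3 a e x) < max_param_dim 3 a"
      using rank_profile_3_not_max[OF assms(1) r rank_sum_lt_if_sum_betti_neq_3[OF r ne]] .
  qed
  then have "haus_outer (hausdorff_dim ?V) ?Bad = 0"
    using haus_outer_non_max_param_dim_eq_0[OF assms(5)] by (rule haus_outer_null_subset[rotated])
  then have "?Bad \<in> null_sets (hausdorff_measure (hausdorff_dim ?V))"
    by (rule haus_outer_null_imp_null_sets)
  then show ?thesis
    by (simp add: nn_integral_null_set null_setsD2)
qed

end
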